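(* For all $\varepsilon>0$ and all $c>0$, there exists an $\varepsilon$-JOT-DP RAM program $P:\mathcal{X}\times\mathcal{E}\to\mathcal{Y}\times\mathcal{E}$ for releasing sums in the unbounded setting such that for all datasets $x=(x_1,\dots,x_n)\in\mathcal{X}$ (and compatible environments $\mathit{env}$), $$\Pr\left[\Big|\mathrm{out}(P(x,\mathit{env}))-\sum_i x_i\Big|\ge\frac{C\ln(n)}{\varepsilon}\right]<O\!\left(\frac{1}{n^c}\right),$$ where $n=|x|$ and $C>0$ is a universal constant.
   Context: Datasets are finite sequences $x=(x_1,\dots,x_n)$ of records, each an integer in $\{0,1,\dots,\Delta\}$ for a fixed $\Delta$; $\mathcal{X}$ is the set of all such finite sequences. Two datasets are adjacent if their insert-delete distance (minimum number of single-record insertions/deletions transforming one into the other) is at most $1$. A program runs on $x$ in an execution environment $\mathit{env}\in\mathcal{E}$ (initial machine state) compatible with $x$; $\mathrm{out}(P(x,\mathit{env}))$ is the random output and $T_P(x,\mathit{env})$ the random runtime. $P$ is $\varepsilon$-JOT-DP in the unbounded setting if for all adjacent $x,x'$ of arbitrary lengths, all compatible $\mathit{env},\mathit{env}'$ and all sets $S$ of (output, runtime) pairs, $\Pr[(\mathrm{out}(P(x,\mathit{env})),T_P(x,\mathit{env}))\in S]\le e^{\varepsilon}\Pr[(\mathrm{out}(P(x',\mathit{env}')),T_P(x',\mathit{env}'))\in S]$. RAM model: infinitely many memory cells holding arbitrary natural numbers; unit-cost arithmetic, Boolean operations, memory access, conditional jumps, and $\texttt{RAND}(n)$ returning a uniform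 integer in $\{0,\dots,n\}$; runtime is the number of executed instructions; the built-in variable $\texttt{input\_len}$ holds $|x|$. *)

theory Defs
  imports "HOL-Probability.Probability"
begin

definition dataset :: "nat \<Rightarrow> nat list \<Rightarrow> bool" where
  "dataset \<Delta> x \<longleftrightarrow> (\<forall>v\<in>set x. v \<le> \<Delta>)"

definition del_one :: "nat list \<Rightarrow> nat list \<Rightarrow> bool" where
  "del_one x x' \<longleftrightarrow> (\<exists>i<length x. x' = take i x @ drop (Suc i) x)"

definition adjacent :: "nat list \<Rightarrow> nat list \<Rightarrow> bool" where
  "adjacent x x' \<longleftrightarrow> x = x' \<or> del_one x x' \<or> del_one x' x"

datatype binop = OpAdd | OpSub | OpMul | OpDiv | OpMod | OpAnd | OpOr | OpEq | OpLess

fun eval_binop :: "binop \<Rightarrow> nat \<Rightarrow> nat \<Rightarrow> nat" where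
  "eval_binop OpAdd u v = u + v"
| "eval_binop OpSub u v = u - v"
| "eval_binop OpMul u v = u * v"
| "eval_binop OpDiv u v = u div v"
| "eval_binop OpMod u v = u mod v"
| "eval_binop OpAnd u v = Bit_Operations.and u v"
| "eval_binop OpOr u v = Bit_Operations.or u v"
| "eval_binop OpEq u v = (if u = v then 1 else 0)"
| "eval_binop OpLess u v = (if u < v then 1 else 0)"

datatype instr =
    Const nat nat
  | Bin binop nat nat nat
  | Not nat nat
  | Load nat nat
  | Store nat nat
  | InLen nat
  | Jmp nat
  | Jz nat nat
  | Rand nat nat
  | Halt

type_synonym program = "instr list"

record state =
  pc :: nat
  mem :: "nat \<Rightarrow> nat"
  halted :: bool
  time :: nat

definition fetch :: "program \<Rightarrow> nat \<Rightarrow> instr" where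
  "fetch P i = (if i < length P then P ! i else Halt)"

fun exec :: "nat \<Rightarrow> instr \<Rightarrow> state \<Rightarrow> state pmf" where
  "exec n (Const a k) s = return_pmf (s\<lparr>mem := (mem s)(a := k), pc := Suc (pc s)\<rparr>)"
| "exec n (Bin op a b c) s =
     return_pmf (s\<lparr>mem := (mem s)(a := eval_binop op (mem s b) (mem s c)), pc := Suc (pc s)\<rparr>)"
| "exec n (Not a b) s =
     return_pmf (s\<lparr>mem := (mem s)(a := (if mem s b = 0 then 1 else 0)), pc := Suc (pc s)\<rparr>)"
| "exec n (Load a b) s = return_pmf (s\<lparr>mem := (mem s)(a := mem s (mem s b)), pc := Suc (pc s)\<rparr>)"
| "exec n (Store a b) s = return_pmf (s\<lparr>mem := (mem s)(mem s a := mem s b), pc := Suc (pc s)\<rparr>)"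
| "exec n (InLen a) s = return_pmf (s\<lparr>mem := (mem s)(a := n), pc := Suc (pc s)\<rparr>)"
| "exec n (Jmp l) s = return_pmf (s\<lparr>pc := l\<rparr>)"
| "exec n (Jz a l) s = return_pmf (s\<lparr>pc := (if mem s a = 0 then l else Suc (pc s))\<rparr>)"
| "exec n (Rand a b) s =
     map_pmf (\<lambda>v. s\<lparr>mem := (mem s)(a := v), pc := Suc (pc s)\<rparr>) (pmf_of_set {0..mem s b})"
| "exec n Halt s = return_pmf (s\<lparr>halted := True\<rparr>)"

definition step :: "program \<Rightarrow> nat \<Rightarrow> state \<Rightarrow> state pmf" where
  "step P n s = (if halted s then return_pmf s
                 else map_pmf (\<lambda>s'. s'\<lparr>time := Suc (time s)\<rparr>) (exec n (fetch P (pc s)) s))"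

definition init :: "(nat \<Rightarrow> nat) \<Rightarrow> state" where
  "init env = \<lparr>pc = 0, mem = env, halted = False, time = 0\<rparr>"

fun run :: "program \<Rightarrow> nat \<Rightarrow> (nat \<Rightarrow> nat) \<Rightarrow> nat \<Rightarrow> state pmf" where
  "run P n env 0 = return_pmf (init env)"
| "run P n env (Suc t) = bind_pmf (run P n env t) (step P n)"

text \<open>An environment (initial memory) is compatible with x if it holds the records of x in
  cells 1..|x|; all other cells hold arbitrary values. The built-in input_len is |x|.\<close>
definition compatible :: "(nat \<Rightarrow> nat) \<Rightarrow> nat list \<Rightarrow> bool" where
  "compatible env x \<longleftrightarrow> (\<forall>i<length x. env (Suc i) = x ! i)"

text \<open>The output is the content of cell 0 at halting, the runtime the number of executed
  instructions. (The event is monotone in t, so the supremum is a limit.)\<close>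
definition out_time_prob ::
    "program \<Rightarrow> nat list \<Rightarrow> (nat \<Rightarrow> nat) \<Rightarrow> (nat \<times> nat) set \<Rightarrow> real" where
  "out_time_prob P x env S =
     (SUP t. measure_pmf.prob (run P (length x) env t) {s. halted s \<and> (mem s 0, time s) \<in> S})"

definition terminates :: "nat \<Rightarrow> program \<Rightarrow> bool" where
  "terminates \<Delta> P \<longleftrightarrow>
     (\<forall>x env. dataset \<Delta> x \<and> compatible env x \<longrightarrow> out_time_prob P x env UNIV = 1)"

definition jot_dp :: "nat \<Rightarrow> real \<Rightarrow> program \<Rightarrow> bool" where
  "jot_dp \<Delta> \<epsilon> P \<longleftrightarrow>
     (\<forall>x x' env env' S. dataset \<Delta> x \<and> dataset \<Delta> x' \<and> adjacent x x' \<and>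
        compatible env x \<and> compatible env' x' \<longrightarrow>
        out_time_prob P x env S \<le> exp \<epsilon> * out_time_prob P x' env' S)"

end

theory Submission
  imports Defs
begin

(*
  After each record the program stops with a hazard that is tiny, 1/(n+m)^d, while records
  remain and then grows geometrically, by the factor (L+1)/L, up to 1/L.  Having stopped after
  j records with running sum s, it outputs y in {0..j*Delta} with probability proportional to
  q^|y - s|, computed exactly in integer arithmetic over all y, so that its runtime is a
  function of j alone.  The joint law of (output, runtime) is therefore a mixture over j of
  these truncated two-sided geometric laws, weighted by the law of the stopping round.

  Inserting or deleting a record changes n by one, which multiplies each weight by a factor
  close to 1 (the geometric growth of the hazard absorbs the shift), and moves each running sum
  by at most Delta, which changes each component by a factor at most q^(-2 Delta).  With
  L about 6/epsilon and q about exp(-epsilon/(8 (Delta + 1))) both factors are at most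
  exp(epsilon/2).  The output misses the sum by C ln n / epsilon only if the program stops
  before the last record, which has probability at most n/(n+m)^d <= n^(-c) for d >= c + 1,
  or if the geometric noise is that large, which has probability O(n^(-c-1)).
*)

section \<open>Halting probabilities\<close>

fun run_from :: "program \<Rightarrow> nat \<Rightarrow> nat \<Rightarrow> state \<Rightarrow> state pmf" where
  "run_from P n 0 s = return_pmf s"
| "run_from P n (Suc k) s = bind_pmf (step P n s) (run_from P n k)"

lemma run_from_Suc':
  "run_from P n (Suc k) s = bind_pmf (run_from P n k s) (step P n)"
proof (induction k arbitrary: s)
  case 0
  have "run_from P n 0 = return_pmf" by (simp add: fun_eq_iff)
  then show ?case by (simp add: bind_return_pmf bind_return_pmf')
next
  case (Suc k)
  have "run_from P n (Suc k) = (\<lambda>s'. bind_pmf (run_from P n k s') (step P n))"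
    using Suc.IH by (simp add: fun_eq_iff)
  then have "run_from P n (Suc (Suc k)) s = bind_pmf (step P n s) (\<lambda>s'. bind_pmf (run_from P n k s') (step P n))"
    by simp
  also have "\<dots> = bind_pmf (run_from P n (Suc k) s) (step P n)"
    by (simp add: bind_assoc_pmf)
  finally show ?case .
qed

declare run_from.simps(2) [simp del]

lemma run_eq_run_from: "run P n env t = run_from P n t (init env)"
  by (induction t) (simp_all add: run_from_Suc')

definition halt_event :: "(nat \<times> nat) set \<Rightarrow> state set" where
  "halt_event S = {s. halted s \<and> (mem s 0, time s) \<in> S}"

text \<open>\<open>out_time_prob\<close> for an arbitrary start state (\<open>out_time_prob_eq_halt_prob\<close>), so that runs
  can be unfolded one step at a time (\<open>halt_prob_step\<close>).\<close>
definition halt_prob :: "program \<Rightarrow> nat \<Rightarrow> (nat \<times> nat) set \<Rightarrow> state \<Rightarrow> ennreal" where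
  "halt_prob P n S s = (SUP k. emeasure (run_from P n k s) (halt_event S))"

lemma step_halted: "halted s \<Longrightarrow> step P n s = return_pmf s"
  by (simp add: step_def)

lemma run_from_halted: "halted s \<Longrightarrow> run_from P n k s = return_pmf s"
  by (induction k) (simp_all add: run_from.simps(2) step_halted bind_return_pmf)

lemma indicator_halt_event_le_step:
  "indicator (halt_event S) s \<le> emeasure (step P n s) (halt_event S)"
  by (cases "s \<in> halt_event S") (simp_all add: halt_event_def step_halted)

lemma incseq_run_from_halt_event: "incseq (\<lambda>k. emeasure (run_from P n k s) (halt_event S))"
proof (rule incseq_SucI)
  fix k
  have "emeasure (run_from P n k s) (halt_event S)
      = (\<integral>\<^sup>+s'. indicator (halt_event S) s' \<partial>run_from P n k s)"
    by simp
  also have "\<dots> \<le> (\<integral>\<^sup>+s'. emeasure (step P n s') (halt_event S) \<partial>run_from P n k s)"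
    by (intro nn_integral_mono indicator_halt_event_le_step)
  also have "\<dots> = emeasure (run_from P n (Suc k) s) (halt_event S)"
    by (simp add: run_from_Suc')
  finally show "emeasure (run_from P n k s) (halt_event S) \<le> emeasure (run_from P n (Suc k) s) (halt_event S)" .
qed

lemma halt_prob_step: "halt_prob P n S s = (\<integral>\<^sup>+s'. halt_prob P n S s' \<partial>step P n s)"
proof -
  have "halt_prob P n S s = (SUP k. emeasure (run_from P n (Suc k) s) (halt_event S))"
    unfolding halt_prob_def
  proof (rule antisym; rule SUP_mono)
    fix k
    show "\<exists>k'\<in>UNIV. emeasure (run_from P n k s) (halt_event S) \<le> emeasure (run_from P n (Suc k') s) (halt_event S)"
      using incseq_SucD[OF incseq_run_from_halt_event] by blast
  qed blast
  also have "\<dots> = (SUP k. \<integral>\<^sup>+s'. emeasure (run_from P n k s') (halt_event S) \<partial>step P n s)"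
    by (simp add: run_from.simps(2))
  also have "\<dots> = (\<integral>\<^sup>+s'. halt_prob P n S s' \<partial>step P n s)"
    unfolding halt_prob_def
    by (rule nn_integral_monotone_convergence_SUP[symmetric])
      (use incseq_run_from_halt_event in \<open>auto simp: incseq_def le_fun_def\<close>)
  finally show ?thesis .
qed

lemma halt_prob_halted: "halted s \<Longrightarrow> halt_prob P n S s = (if (mem s 0, time s) \<in> S then 1 else 0)"
  by (simp add: halt_prob_def run_from_halted halt_event_def)

lemma halt_prob_add_compl_le_1: "halt_prob P n S s + halt_prob P n (- S) s \<le> 1"
proof -
  have "halt_prob P n S s + halt_prob P n (- S) s
      = (SUP k. emeasure (run_from P n k s) (halt_event S) + emeasure (run_from P n k s) (halt_event (- S)))"
    unfolding halt_prob_def by (intro ennreal_SUP_add[symmetric] incseq_run_from_halt_event)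
  also have "\<dots> \<le> 1"
  proof (rule SUP_least)
    fix k
    have "emeasure (run_from P n k s) (halt_event S) + emeasure (run_from P n k s) (halt_event (- S))
        = emeasure (run_from P n k s) (halt_event S \<union> halt_event (- S))"
      by (rule plus_emeasure) (auto simp: halt_event_def)
    then show "emeasure (run_from P n k s) (halt_event S) + emeasure (run_from P n k s) (halt_event (- S)) \<le> 1"
      by (simp add: measure_pmf.emeasure_le_1)
  qed
  finally show ?thesis .
qed

lemma out_time_prob_eq_halt_prob:
  "ennreal (out_time_prob P x env S) = halt_prob P (length x) S (init env)"
proof -
  let ?p = "\<lambda>t. measure_pmf.prob (run P (length x) env t) (halt_event S)"
  have "halt_prob P (length x) S (init env) = (SUP t. ennreal (?p t))"
    by (simp add: halt_prob_def run_eq_run_from measure_pmf.emeasure_eq_measure)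
  also have "\<dots> = ennreal (SUP t. ?p t)"
  proof (rule ennreal_SUP[symmetric])
    have "(SUP t. ennreal (?p t)) \<le> 1"
      by (rule SUP_least) simp
    then show "(SUP t. ennreal (?p t)) \<noteq> \<top>"
      using neq_top_trans[OF ennreal_one_neq_top] by blast
  qed simp
  finally show ?thesis
    by (simp add: out_time_prob_def halt_event_def)
qed

lemma out_time_prob_nonneg: "0 \<le> out_time_prob P x env S"
proof -
  have "bdd_above (range (\<lambda>t. measure_pmf.prob (run P (length x) env t) (halt_event S)))"
    by (rule bdd_aboveI[of _ 1]) auto
  then have "measure_pmf.prob (run P (length x) env 0) (halt_event S) \<le> out_time_prob P x env S"
    unfolding out_time_prob_def halt_event_def[symmetric] by (rule cSUP_upper[rotated]) simp
  then show ?thesis by (meson measure_nonneg order_trans)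
qed

fun det_exec :: "nat \<Rightarrow> instr \<Rightarrow> state \<Rightarrow> state" where
  "det_exec n (Const a k) s = s\<lparr>mem := (mem s)(a := k), pc := Suc (pc s)\<rparr>"
| "det_exec n (Bin op a b c) s = s\<lparr>mem := (mem s)(a := eval_binop op (mem s b) (mem s c)), pc := Suc (pc s)\<rparr>"
| "det_exec n (Not a b) s = s\<lparr>mem := (mem s)(a := (if mem s b = 0 then 1 else 0)), pc := Suc (pc s)\<rparr>"
| "det_exec n (Load a b) s = s\<lparr>mem := (mem s)(a := mem s (mem s b)), pc := Suc (pc s)\<rparr>"
| "det_exec n (Store a b) s = s\<lparr>mem := (mem s)(mem s a := mem s b), pc := Suc (pc s)\<rparr>"
| "det_exec n (InLen a) s = s\<lparr>mem := (mem s)(a := n), pc := Suc (pc s)\<rparr>"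
| "det_exec n (Jmp l) s = s\<lparr>pc := l\<rparr>"
| "det_exec n (Jz a l) s = s\<lparr>pc := (if mem s a = 0 then l else Suc (pc s))\<rparr>"
| "det_exec n (Rand a b) s = s"
| "det_exec n Halt s = s\<lparr>halted := True\<rparr>"

fun is_rand :: "instr \<Rightarrow> bool" where
  "is_rand (Rand a b) = True"
| "is_rand _ = False"

lemma exec_det_exec: "\<not> is_rand i \<Longrightarrow> exec n i s = return_pmf (det_exec n i s)"
  by (cases i) auto

definition det_step :: "program \<Rightarrow> nat \<Rightarrow> state \<Rightarrow> state" where
  "det_step P n s = (det_exec n (fetch P (pc s)) s)\<lparr>time := Suc (time s)\<rparr>"

fun det_steps :: "program \<Rightarrow> nat \<Rightarrow> nat \<Rightarrow> state \<Rightarrow> state" where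
  "det_steps P n 0 s = s"
| "det_steps P n (Suc k) s = det_steps P n k (det_step P n s)"

fun det_steps_ok :: "program \<Rightarrow> nat \<Rightarrow> nat \<Rightarrow> state \<Rightarrow> bool" where
  "det_steps_ok P n 0 s = True"
| "det_steps_ok P n (Suc k) s =
     (\<not> halted s \<and> \<not> is_rand (fetch P (pc s)) \<and> det_steps_ok P n k (det_step P n s))"

lemma det_steps_numeral:
  "det_steps P n (numeral k) s = det_steps P n (pred_numeral k) (det_step P n s)"
  by (simp add: numeral_eq_Suc)

lemma det_steps_ok_numeral:
  "det_steps_ok P n (numeral k) s =
     (\<not> halted s \<and> \<not> is_rand (fetch P (pc s)) \<and> det_steps_ok P n (pred_numeral k) (det_step P n s))"
  by (simp add: numeral_eq_Suc)

lemma halt_prob_det_steps: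
  "det_steps_ok P n k s \<Longrightarrow> halt_prob P n S s = halt_prob P n S (det_steps P n k s)"
proof (induction k arbitrary: s)
  case (Suc k)
  then have "halt_prob P n S s = halt_prob P n S (det_step P n s)"
    by (subst halt_prob_step) (simp add: step_def exec_det_exec det_step_def)
  with Suc show ?case by simp
qed simp

lemma halt_prob_Rand:
  assumes "\<not> halted s" "fetch P (pc s) = Rand a b"
  shows "halt_prob P n S s =
    (\<Sum>v\<in>{0..mem s b}. halt_prob P n S (s\<lparr>mem := (mem s)(a := v), pc := Suc (pc s), time := Suc (time s)\<rparr>))
      / of_nat (Suc (mem s b))"
  using assms by (subst halt_prob_step) (simp add: step_def nn_integral_pmf_of_set)

section \<open>Stopping times given by a hazard sequence\<close>

definition hazard_dist :: "(nat \<Rightarrow> real) \<Rightarrow> nat \<Rightarrow> real" where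
  "hazard_dist h j = h j * (\<Prod>i<j. 1 - h i)"

lemma hazard_dist_nonneg:
  assumes "\<And>i. 0 \<le> h i" "\<And>i. h i \<le> 1"
  shows "0 \<le> hazard_dist h j"
  unfolding hazard_dist_def using assms by (intro mult_nonneg_nonneg prod_nonneg) auto

lemma sum_hazard_dist: "(\<Sum>j<J. hazard_dist h j) = 1 - (\<Prod>j<J. 1 - h j)"
  by (induction J) (simp_all add: hazard_dist_def algebra_simps)

lemma hazard_dist_0: "hazard_dist h 0 = h 0"
  by (simp add: hazard_dist_def)

lemma hazard_dist_Suc: "hazard_dist h (Suc i) = (1 - h 0) * hazard_dist (\<lambda>l. h (Suc l)) i"
  by (simp add: hazard_dist_def prod.lessThan_Suc_shift del: prod.lessThan_Suc)

lemma sum_hazard_dist_Suc: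
  assumes "\<And>i. 0 \<le> h i" "\<And>i. h i \<le> 1"
  shows "(\<Sum>i<Suc k. ennreal (hazard_dist h i) * f i)
    = ennreal (h 0) * f 0 + ennreal (1 - h 0) * (\<Sum>i<k. ennreal (hazard_dist (\<lambda>l. h (Suc l)) i) * f (Suc i))"
proof -
  have "ennreal (hazard_dist h (Suc i)) = ennreal (1 - h 0) * ennreal (hazard_dist (\<lambda>l. h (Suc l)) i)" for i
    using assms by (simp add: hazard_dist_Suc ennreal_mult hazard_dist_nonneg)
  then show ?thesis
    by (simp add: sum.lessThan_Suc_shift hazard_dist_0 sum_distrib_left mult.assoc del: sum.lessThan_Suc)
qed

lemma hazard_dist_sums:
  assumes "0 < \<eta>" "\<And>i. \<eta> \<le> h i" "\<And>i. h i \<le> 1"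
  shows "hazard_dist h sums 1"
proof -
  have "(\<lambda>J. \<Prod>j<J. 1 - h j) \<longlonglongrightarrow> 0"
  proof (rule Lim_null_comparison)
    show "\<forall>\<^sub>F J in sequentially. norm (\<Prod>j<J. 1 - h j) \<le> (1 - \<eta>) ^ J"
    proof (intro always_eventually allI)
      fix J
      have "(\<Prod>j<J. 1 - h j) \<le> (\<Prod>j<J. 1 - \<eta>)"
        by (rule prod_mono) (use assms in auto)
      moreover have "0 \<le> (\<Prod>j<J. 1 - h j)"
        by (rule prod_nonneg) (use assms in auto)
      ultimately show "norm (\<Prod>j<J. 1 - h j) \<le> (1 - \<eta>) ^ J"
        by simp
    qed
    show "(\<lambda>J. (1 - \<eta>) ^ J) \<longlonglongrightarrow> 0"
      using assms(1) assms(2,3)[of 0] by (intro LIMSEQ_power_zero) auto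
  qed
  then have "(\<lambda>J. 1 - (\<Prod>j<J. 1 - h j)) \<longlonglongrightarrow> 1 - 0"
    by (intro tendsto_intros)
  then show ?thesis
    by (simp add: sums_def sum_hazard_dist)
qed

lemma hazard_dist_le_scaled:
  assumes "\<And>i. 0 \<le> a i" "\<And>i. a i \<le> b i" "\<And>i. b i \<le> 1" "b j \<le> c * a j"
  shows "hazard_dist b j \<le> c * hazard_dist a j"
proof -
  have "(\<Prod>i<j. 1 - b i) \<le> (\<Prod>i<j. 1 - a i)"
    by (rule prod_mono) (use assms in \<open>auto simp: diff_le_mono2\<close>)
  moreover have "0 \<le> b j"
    using assms(1,2)[of j] by linarith
  ultimately have "b j * (\<Prod>i<j. 1 - b i) \<le> (c * a j) * (\<Prod>i<j. 1 - a i)"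
    using assms(3,4) by (intro mult_mono prod_nonneg) auto
  then show ?thesis
    by (simp add: hazard_dist_def mult.assoc)
qed

lemma prod_one_minus_ge_gap:
  fixes a b :: "nat \<Rightarrow> real"
  assumes "\<And>i. 0 \<le> a i" "\<And>i. a i \<le> b i" "\<And>i. b i \<le> p" "p < 1"
  shows "(\<Prod>i<j. 1 - a i) * (1 - (\<Sum>i<j. b i - a i) / (1 - p)) \<le> (\<Prod>i<j. 1 - b i)"
proof (induction j)
  case (Suc j)
  have "a i \<le> 1" for i
    using assms(2)[of i] assms(3)[of i] assms(4) by linarith
  define A where "A = (\<Prod>i<j. 1 - a i)"
  define T where "T = (\<Sum>i<j. b i - a i) / (1 - p)"
  define t where "t = (b j - a j) / (1 - p)"
  have A0: "0 \<le> A"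
    unfolding A_def using \<open>\<And>i. a i \<le> 1\<close> by (intro prod_nonneg) simp
  have T0: "0 \<le> T" and t0: "0 \<le> t"
    unfolding T_def t_def using assms by (auto intro!: divide_nonneg_pos sum_nonneg)
  have "b j - a j = (1 - p) * t"
    unfolding t_def using assms(4) by simp
  also have "\<dots> \<le> (1 - a j) * t"
    using assms(2,3)[of j] t0 by (intro mult_right_mono) auto
  finally have "(1 - a j) * (1 - T - t) \<le> (1 - T) * (1 - b j)"
    using mult_nonneg_nonneg[of "b j - a j" T] assms(2)[of j] T0 by (simp add: algebra_simps)
  then have "A * ((1 - a j) * (1 - T - t)) \<le> A * ((1 - T) * (1 - b j))"
    by (rule mult_left_mono[OF _ A0])
  then have "A * (1 - a j) * (1 - (T + t)) \<le> A * (1 - T) * (1 - b j)"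
    by (simp only: mult.assoc diff_diff_eq)
  also have "\<dots> \<le> (\<Prod>i<j. 1 - b i) * (1 - b j)"
    using Suc.IH assms(3)[of j] assms(4) by (intro mult_right_mono) (simp_all add: A_def T_def)
  finally show ?case
    by (simp add: A_def T_def t_def add_divide_distrib mult.commute)
qed simp

lemma hazard_dist_ge_scaled:
  assumes "\<And>i. 0 \<le> a i" "\<And>i. a i \<le> b i" "\<And>i. b i \<le> p" "p < 1"
  shows "(1 - (\<Sum>i<j. b i - a i) / (1 - p)) * hazard_dist a j \<le> hazard_dist b j"
proof -
  have a1: "a i \<le> 1" and b1: "b i \<le> 1" for i
    using assms(2)[of i] assms(3)[of i] assms(4) by linarith+
  have b0: "0 \<le> b i" for i
    using assms(1,2)[of i] by linarith
  then have nonneg: "0 \<le> hazard_dist b j"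
    using b1 by (intro hazard_dist_nonneg)
  have "0 \<le> hazard_dist a j"
    using assms(1) a1 by (intro hazard_dist_nonneg)
  moreover have "(1 - (\<Sum>i<j. b i - a i) / (1 - p)) * hazard_dist a j \<le> hazard_dist b j"
    if "0 \<le> 1 - (\<Sum>i<j. b i - a i) / (1 - p)"
  proof -
    have "(1 - (\<Sum>i<j. b i - a i) / (1 - p)) * (\<Prod>i<j. 1 - a i) \<le> (\<Prod>i<j. 1 - b i)"
      using prod_one_minus_ge_gap[OF assms] by (simp add: mult.commute)
    then have "a j * ((1 - (\<Sum>i<j. b i - a i) / (1 - p)) * (\<Prod>i<j. 1 - a i)) \<le> b j * (\<Prod>i<j. 1 - b i)"
      using assms(1,2) that a1 b0 by (intro mult_mono mult_nonneg_nonneg prod_nonneg) auto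
    then show ?thesis
      by (simp add: hazard_dist_def algebra_simps)
  qed
  ultimately show ?thesis
    using nonneg mult_nonpos_nonneg[of "1 - (\<Sum>i<j. b i - a i) / (1 - p)" "hazard_dist a j"]
    by linarith
qed

section \<open>The hazard used by the program\<close>

definition hazard :: "nat \<Rightarrow> nat \<Rightarrow> nat \<Rightarrow> nat \<Rightarrow> nat \<Rightarrow> real" where
  "hazard d m L n j = min (1 / real L) (((real L + 1) / real L) ^ (j - n) / real ((n + m) ^ d))"

lemma hazard_nonneg: "0 \<le> hazard d m L n j"
  by (simp add: hazard_def)

lemma hazard_le: "hazard d m L n j \<le> 1 / real L"
  by (simp add: hazard_def)

lemma hazard_le_1: "1 \<le> L \<Longrightarrow> hazard d m L n j \<le> 1"
  using hazard_le[of d m L n j] by (simp add: divide_le_eq_1 order_trans)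

text \<open>Bernoulli's inequality; this is why \<open>m = d * (L + 1)\<close>.\<close>
lemma Suc_power_le:
  fixes k d L :: nat
  assumes "0 < L" "d * (L + 1) \<le> Suc k"
  shows "real (Suc k ^ d) \<le> (real L + 1) / real L * real (k ^ d)"
proof (cases "d = 0")
  case False
  then have "d * 2 \<le> d * (L + 1)"
    using assms(1) by simp
  moreover have "2 \<le> d * 2"
    using False by simp
  ultimately have "2 \<le> Suc k"
    using assms(2) by linarith
  then have k: "1 \<le> real k"
    by simp
  have "real L / (real L + 1) \<le> 1 + real d * (- 1 / (real k + 1))"
  proof -
    have "real (d * (L + 1)) \<le> real (Suc k)"
      using assms(2) by (simp only: of_nat_le_iff)
    then have "real d * (real L + 1) \<le> real k + 1"
      by (simp add: algebra_simps)
    then show ?thesis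
      using assms(1) k by (simp add: field_simps)
  qed
  also have "\<dots> \<le> (1 + (- 1 / (real k + 1))) ^ d"
    by (rule Bernoulli_inequality) (use k in \<open>simp add: field_simps\<close>)
  also have "\<dots> = real k ^ d / (real k + 1) ^ d"
    using k by (simp add: field_simps)
  finally show ?thesis
    using assms(1) k by (simp add: field_simps)
qed (use assms(1) in simp)

context
  fixes d m L :: nat
  assumes d: "1 \<le> d" and L: "2 \<le> L" and m: "m = d * (L + 1)"
begin

private abbreviation "h \<equiv> hazard d m L"
private abbreviation "\<rho> \<equiv> (real L + 1) / real L"
private abbreviation "\<alpha> n \<equiv> 1 / real ((n + m) ^ d)"

private lemma one_le_\<rho>: "1 \<le> \<rho>"
  using L by simp

private lemma m_pos: "0 < m"
  using d m by simp

private lemma \<alpha>_pos: "0 < \<alpha> n"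
  using m_pos by simp

private lemma \<alpha>_mono: "1 \<le> n \<Longrightarrow> \<alpha> n \<le> \<alpha> (n - 1)"
  using m_pos by (intro divide_left_mono) (auto intro!: power_mono)

private lemma \<alpha>_prev_le: "1 \<le> n \<Longrightarrow> \<alpha> (n - 1) \<le> \<rho> * \<alpha> n"
proof -
  assume n: "1 \<le> n"
  have "real (Suc (n - 1 + m) ^ d) \<le> \<rho> * real ((n - 1 + m) ^ d)"
    using L m by (intro Suc_power_le) auto
  moreover have "Suc (n - 1 + m) = n + m"
    using n by simp
  ultimately have le: "real ((n + m) ^ d) \<le> \<rho> * real ((n - 1 + m) ^ d)"
    by simp
  have inverse_le: "\<And>X Y R :: real. 0 < X \<Longrightarrow> 0 < Y \<Longrightarrow> X \<le> R * Y \<Longrightarrow> 1 / Y \<le> R * (1 / X)"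
    by (simp add: field_simps)
  show ?thesis
    by (rule inverse_le[OF _ _ le]) (use m_pos in simp_all)
qed

private lemma hazard_eq: "h n j = min (1 / real L) (\<rho> ^ (j - n) * \<alpha> n)"
  by (simp add: hazard_def)

lemma hazard_le_prev: "1 \<le> n \<Longrightarrow> h n j \<le> h (n - 1) j"
  unfolding hazard_eq using one_le_\<rho> \<alpha>_mono[of n] \<alpha>_pos[of n]
  by (intro min.mono mult_mono power_increasing) auto

lemma hazard_prev_le: "1 \<le> n \<Longrightarrow> h (n - 1) j \<le> \<rho>\<^sup>2 * h n j"
proof -
  assume n: "1 \<le> n"
  have "\<rho> ^ (j - (n - 1)) * \<alpha> (n - 1) \<le> \<rho> ^ Suc (j - n) * (\<rho> * \<alpha> n)"
    using one_le_\<rho> \<alpha>_prev_le[OF n] \<alpha>_pos[of "n - 1"] by (intro mult_mono power_increasing) auto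
  also have "\<dots> = \<rho>\<^sup>2 * (\<rho> ^ (j - n) * \<alpha> n)"
    by (simp only: power2_eq_square power_Suc mult_ac)
  finally have "min (1 / real L) (\<rho> ^ (j - (n - 1)) * \<alpha> (n - 1)) \<le> min (\<rho>\<^sup>2 / real L) (\<rho>\<^sup>2 * (\<rho> ^ (j - n) * \<alpha> n))"
    using one_le_\<rho> L by (intro min.mono) (auto simp: divide_right_mono)
  then show ?thesis
    unfolding hazard_eq using one_le_\<rho> by (simp add: min_mult_distrib_left)
qed

private lemma hazard_prev_le_shift: "n \<le> j \<Longrightarrow> 1 \<le> n \<Longrightarrow> h (n - 1) j \<le> h n (j + 2)"
proof -
  assume n: "n \<le> j" "1 \<le> n"
  have "\<rho> ^ Suc (j - n) * \<alpha> (n - 1) \<le> \<rho> ^ Suc (j - n) * (\<rho> * \<alpha> n)"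
    using \<alpha>_prev_le[OF n(2)] one_le_\<rho> by (intro mult_left_mono) auto
  also have "\<dots> = \<rho> ^ Suc (Suc (j - n)) * \<alpha> n"
    by (simp only: power_Suc mult_ac)
  moreover have "j - (n - 1) = Suc (j - n)" "j + 2 - n = Suc (Suc (j - n))"
    using n by auto
  ultimately have "\<rho> ^ (j - (n - 1)) * \<alpha> (n - 1) \<le> \<rho> ^ (j + 2 - n) * \<alpha> n"
    by simp
  then show ?thesis
    unfolding hazard_eq by (rule min.mono[OF order_refl])
qed

private lemma hazard_diff_before: "j < n \<Longrightarrow> h (n - 1) j - h n j \<le> \<alpha> n / real L"
proof -
  assume j: "j < n"
  have "h (n - 1) j - h n j \<le> \<alpha> (n - 1) - \<alpha> n"
    using j \<alpha>_mono[of n] unfolding hazard_eq by (auto simp: min_def)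
  also have "\<dots> \<le> \<alpha> n / real L"
  proof -
    have "\<rho> * \<alpha> n = \<alpha> n + \<alpha> n / real L"
      using L m_pos by (simp add: field_simps)
    with \<alpha>_prev_le[of n] j show ?thesis
      by simp
  qed
  finally show ?thesis .
qed

lemma sum_hazard_diff_le: "1 \<le> n \<Longrightarrow> (\<Sum>i<j. h (n - 1) i - h n i) \<le> 3 / real L"
proof -
  assume n: "1 \<le> n"
  have split: "{..<j} = {..<min j n} \<union> {n..<j}"
    by auto
  have "(\<Sum>i<min j n. h (n - 1) i - h n i) \<le> (\<Sum>i<min j n. \<alpha> n / real L)"
    by (intro sum_mono hazard_diff_before) simp
  also have "\<dots> \<le> real n * \<alpha> n / real L"
    using L by (simp add: divide_right_mono)
  also have "\<dots> \<le> 1 / real L"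
  proof -
    have "n \<le> n + m" by simp
    also have "\<dots> \<le> (n + m) ^ d"
      using d n by (simp add: self_le_power)
    finally have "real n \<le> real ((n + m) ^ d)"
      by (simp only: of_nat_le_iff)
    then have "real n * \<alpha> n \<le> 1"
      using m_pos by simp
    then show ?thesis
      using L by (intro divide_right_mono) simp_all
  qed
  finally have before: "(\<Sum>i<min j n. h (n - 1) i - h n i) \<le> 1 / real L" .
  let ?g = "\<lambda>i. h n i + h n (Suc i)"
  have after: "(\<Sum>i\<in>{n..<j}. h (n - 1) i - h n i) \<le> 2 / real L"
  proof (cases "n \<le> j")
    case True
    have "(\<Sum>i\<in>{n..<j}. h (n - 1) i - h n i) \<le> (\<Sum>i\<in>{n..<j}. ?g (Suc i) - ?g i)"
      using hazard_prev_le_shift n by (intro sum_mono) (simp add: numeral_2_eq_2)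
    also have "\<dots> = ?g j - ?g n"
      using True by (rule sum_Suc_diff')
    also have "\<dots> \<le> 2 / real L"
      using hazard_le[of d m L n j] hazard_le[of d m L n "Suc j"]
        hazard_nonneg[of d m L n n] hazard_nonneg[of d m L n "Suc n"] by simp
    finally show ?thesis .
  qed (use L in simp)
  have "(\<Sum>i<j. h (n - 1) i - h n i) = (\<Sum>i<min j n. h (n - 1) i - h n i) + (\<Sum>i\<in>{n..<j}. h (n - 1) i - h n i)"
    unfolding split by (rule sum.union_disjoint) auto
  with before after show ?thesis
    by simp
qed

lemma stop_dist_sums: "hazard_dist (h n) sums 1"
proof (rule hazard_dist_sums)
  show "0 < min (1 / real L) (\<alpha> n)"
    using L \<alpha>_pos[of n] by simp
  show "min (1 / real L) (\<alpha> n) \<le> h n i" for i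
  proof -
    have "1 \<le> \<rho> ^ (i - n)"
      using one_le_\<rho> by (rule one_le_power)
    from mult_right_mono[OF this less_imp_le[OF \<alpha>_pos]] show ?thesis
      unfolding hazard_eq by (intro min.mono) simp_all
  qed
  show "h n i \<le> 1" for i
    using L by (intro hazard_le_1) simp
qed

lemma sum_stop_dist_before: "(\<Sum>j<n. hazard_dist (h n) j) \<le> real n * \<alpha> n"
proof -
  have "(\<Sum>j<n. hazard_dist (h n) j) = 1 - (\<Prod>j<n. 1 - h n j)"
    by (rule sum_hazard_dist)
  also have "\<dots> \<le> (\<Sum>j<n. h n j)"
    using Weierstrass_prod_ineq[of "{..<n}" "h n"] hazard_nonneg[of d m L n] hazard_le_1[of L d m n] L
    by simp
  also have "\<dots> \<le> (\<Sum>j<n. \<alpha> n)"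
    by (intro sum_mono) (simp add: hazard_eq)
  finally show ?thesis
    by simp
qed

lemma stop_dist_prev_le: "1 \<le> n \<Longrightarrow> hazard_dist (h (n - 1)) j \<le> \<rho>\<^sup>2 * hazard_dist (h n) j"
  using L by (intro hazard_dist_le_scaled hazard_nonneg hazard_le_prev hazard_le_1 hazard_prev_le) auto

lemma stop_dist_le_prev:
  assumes "1 \<le> n" "4 \<le> L"
  shows "(1 - 3 / (real L - 1)) * hazard_dist (h n) j \<le> hazard_dist (h (n - 1)) j"
proof -
  have "1 - 3 / (real L - 1) \<le> 1 - (\<Sum>i<j. h (n - 1) i - h n i) / (1 - 1 / real L)"
  proof -
    have "(\<Sum>i<j. h (n - 1) i - h n i) / (1 - 1 / real L) \<le> (3 / real L) / (1 - 1 / real L)"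
      using sum_hazard_diff_le[OF assms(1)] L by (intro divide_right_mono) auto
    also have "\<dots> = 3 / (real L - 1)"
      using assms(2) by (simp add: field_simps)
    finally show ?thesis by simp
  qed
  moreover have "(1 - (\<Sum>i<j. h (n - 1) i - h n i) / (1 - 1 / real L)) * hazard_dist (h n) j
      \<le> hazard_dist (h (n - 1)) j"
    using L by (intro hazard_dist_ge_scaled hazard_nonneg hazard_le_prev[OF assms(1)] hazard_le) auto
  moreover have "0 \<le> hazard_dist (h n) j"
    using L by (intro hazard_dist_nonneg hazard_nonneg hazard_le_1) auto
  ultimately show ?thesis
    by (meson mult_right_mono order.trans)
qed

end

section \<open>The truncated two-sided geometric distribution\<close>

definition absdiff :: "nat \<Rightarrow> nat \<Rightarrow> nat" where
  "absdiff y z = (y - z) + (z - y)"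

lemma real_absdiff: "real (absdiff y z) = \<bar>real y - real z\<bar>"
  by (simp add: absdiff_def)

lemma absdiff_commute: "absdiff y z = absdiff z y"
  by (simp add: absdiff_def)

lemma absdiff_triangle: "absdiff y z \<le> absdiff y w + absdiff w z"
  by (simp add: absdiff_def)

lemma absdiff_le: "y \<le> U \<Longrightarrow> z \<le> U \<Longrightarrow> absdiff y z \<le> U"
  by (simp add: absdiff_def)

definition geom_mech :: "real \<Rightarrow> nat \<Rightarrow> nat \<Rightarrow> nat set \<Rightarrow> real" where
  "geom_mech q \<sigma> U A = (\<Sum>y\<in>{..U} \<inter> A. q ^ absdiff y \<sigma>) / (\<Sum>y\<le>U. q ^ absdiff y \<sigma>)"

lemma one_le_geom_mech_total: "0 < (q::real) \<Longrightarrow> \<sigma> \<le> U \<Longrightarrow> 1 \<le> (\<Sum>y\<le>U. q ^ absdiff y \<sigma>)"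
  using member_le_sum[of \<sigma> "{..U}" "\<lambda>y. q ^ absdiff y \<sigma>"] by (simp add: absdiff_def)

lemma geom_mech_nonneg: "0 \<le> q \<Longrightarrow> 0 \<le> geom_mech q \<sigma> U A"
  unfolding geom_mech_def by (intro divide_nonneg_nonneg sum_nonneg) auto

lemma geom_mech_mono: "0 \<le> q \<Longrightarrow> A \<subseteq> B \<Longrightarrow> geom_mech q \<sigma> U A \<le> geom_mech q \<sigma> U B"
  unfolding geom_mech_def by (intro divide_right_mono sum_mono2 sum_nonneg) auto

lemma geom_mech_le_1: "0 \<le> q \<Longrightarrow> geom_mech q \<sigma> U A \<le> 1"
proof -
  assume q: "0 \<le> q"
  have "(\<Sum>y\<in>{..U} \<inter> A. q ^ absdiff y \<sigma>) \<le> (\<Sum>y\<le>U. q ^ absdiff y \<sigma>)"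
    using q by (intro sum_mono2) auto
  moreover have "0 \<le> (\<Sum>y\<le>U. q ^ absdiff y \<sigma>)"
    using q by (intro sum_nonneg) auto
  ultimately show ?thesis
    unfolding geom_mech_def by (auto simp: divide_le_eq_1)
qed

lemma geom_mech_add_compl: "0 < q \<Longrightarrow> \<sigma> \<le> U \<Longrightarrow> geom_mech q \<sigma> U A + geom_mech q \<sigma> U (- A) = 1"
proof -
  assume "0 < q" "\<sigma> \<le> U"
  have "(\<Sum>y\<in>{..U} \<inter> A. q ^ absdiff y \<sigma>) + (\<Sum>y\<in>{..U} \<inter> - A. q ^ absdiff y \<sigma>) = (\<Sum>y\<le>U. q ^ absdiff y \<sigma>)"
    by (subst sum.union_disjoint[symmetric]) (auto intro: sum.cong)
  with one_le_geom_mech_total[OF \<open>0 < q\<close> \<open>\<sigma> \<le> U\<close>] show ?thesis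
    unfolding geom_mech_def by (simp add: add_divide_distrib[symmetric])
qed

text \<open>Moving the centre by at most \<open>\<Delta>\<close> changes both the numerator and the normalising sum by
  a factor of at most \<open>q ^ \<Delta>\<close>.\<close>
lemma geom_mech_shift:
  assumes q: "0 < q" "q \<le> 1" and "\<sigma> \<le> U" "\<sigma>' \<le> U" "absdiff \<sigma> \<sigma>' \<le> \<Delta>"
  shows "q ^ (2 * \<Delta>) * geom_mech q \<sigma> U A \<le> geom_mech q \<sigma>' U A"
proof -
  have shift: "q ^ \<Delta> * q ^ absdiff y \<tau> \<le> q ^ absdiff y \<tau>'" if "absdiff \<tau> \<tau>' \<le> \<Delta>" for y \<tau> \<tau>'
  proof -
    have "absdiff y \<tau>' \<le> absdiff y \<tau> + \<Delta>"
      using absdiff_triangle[of y \<tau>' \<tau>] that by simp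
    then show ?thesis
      using q by (simp add: power_add[symmetric] add.commute power_decreasing)
  qed
  define N where "N = (\<Sum>y\<in>{..U} \<inter> A. q ^ absdiff y \<sigma>)"
  define N' where "N' = (\<Sum>y\<in>{..U} \<inter> A. q ^ absdiff y \<sigma>')"
  define Z where "Z = (\<Sum>y\<le>U. q ^ absdiff y \<sigma>)"
  define Z' where "Z' = (\<Sum>y\<le>U. q ^ absdiff y \<sigma>')"
  have N: "q ^ \<Delta> * N \<le> N'"
    unfolding N_def N'_def sum_distrib_left using assms(5) by (intro sum_mono shift)
  have Z: "q ^ \<Delta> * Z' \<le> Z"
    unfolding Z_def Z'_def sum_distrib_left using assms(5) by (intro sum_mono shift) (simp add: absdiff_commute)
  have "1 \<le> Z" "1 \<le> Z'" "0 \<le> N'"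
    unfolding Z_def Z'_def N'_def using one_le_geom_mech_total q assms(3,4) by (auto intro: sum_nonneg)
  have "q ^ (2 * \<Delta>) * (N / Z) = (q ^ \<Delta> * N) * (q ^ \<Delta> / Z)"
    by (simp add: power_mult[symmetric] mult_2 power_add)
  also have "\<dots> \<le> N' * (1 / Z')"
    using N Z q \<open>1 \<le> Z\<close> \<open>1 \<le> Z'\<close> \<open>0 \<le> N'\<close>
    by (intro mult_mono) (auto simp: field_simps)
  finally show ?thesis
    by (simp add: geom_mech_def N_def N'_def Z_def Z'_def)
qed

lemma sum_power_interval_le:
  fixes q :: real
  assumes "0 \<le> q" "q < 1"
  shows "(\<Sum>i\<in>{k..<k + N}. q ^ i) \<le> q ^ k / (1 - q)"
proof -
  have "(\<Sum>i\<in>{k..<k + N}. q ^ i) = (\<Sum>i\<in>{0..<N}. q ^ (i + k))"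
    using sum.shift_bounds_nat_ivl[of "\<lambda>i. q ^ i" 0 k N] by (simp add: add.commute)
  also have "\<dots> = q ^ k * (\<Sum>i<N. q ^ i)"
    by (simp add: power_add sum_distrib_left lessThan_atLeast0 mult.commute)
  also have "\<dots> = q ^ k * ((1 - q ^ N) / (1 - q))"
    using assms by (simp add: sum_gp_strict)
  also have "\<dots> \<le> q ^ k * (1 / (1 - q))"
    using assms by (intro mult_left_mono divide_right_mono) auto
  finally show ?thesis
    by simp
qed

lemma geom_mech_tail:
  assumes q: "0 < q" "q < 1" and "\<sigma> \<le> U"
  shows "geom_mech q \<sigma> U {y. k \<le> absdiff y \<sigma>} \<le> 2 * q ^ k / (1 - q)"
proof -
  define A1 where "A1 = {y. y \<le> U \<and> \<sigma> \<le> y \<and> k \<le> absdiff y \<sigma>}"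
  define A2 where "A2 = {y. y \<le> U \<and> y < \<sigma> \<and> k \<le> absdiff y \<sigma>}"
  have "(\<Sum>y\<in>A1. q ^ absdiff y \<sigma>) = (\<Sum>i\<in>(\<lambda>y. y - \<sigma>) ` A1. q ^ i)"
    by (subst sum.reindex) (auto simp: inj_on_def A1_def absdiff_def)
  also have "\<dots> \<le> (\<Sum>i\<in>{k..<k + Suc U}. q ^ i)"
    using q by (intro sum_mono2) (auto simp: A1_def absdiff_def)
  finally have s1: "(\<Sum>y\<in>A1. q ^ absdiff y \<sigma>) \<le> q ^ k / (1 - q)"
    using sum_power_interval_le[of q k "Suc U"] q by linarith
  have "(\<Sum>y\<in>A2. q ^ absdiff y \<sigma>) = (\<Sum>i\<in>(\<lambda>y. \<sigma> - y) ` A2. q ^ i)"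
    by (subst sum.reindex) (auto simp: inj_on_def A2_def absdiff_def)
  also have "\<dots> \<le> (\<Sum>i\<in>{k..<k + Suc U}. q ^ i)"
    using q assms(3) by (intro sum_mono2) (auto simp: A2_def absdiff_def)
  finally have s2: "(\<Sum>y\<in>A2. q ^ absdiff y \<sigma>) \<le> q ^ k / (1 - q)"
    using sum_power_interval_le[of q k "Suc U"] q by linarith
  have "{..U} \<inter> {y. k \<le> absdiff y \<sigma>} = A1 \<union> A2"
    by (auto simp: A1_def A2_def)
  then have "(\<Sum>y\<in>{..U} \<inter> {y. k \<le> absdiff y \<sigma>}. q ^ absdiff y \<sigma>)
      = (\<Sum>y\<in>A1. q ^ absdiff y \<sigma>) + (\<Sum>y\<in>A2. q ^ absdiff y \<sigma>)"
    by (simp add: sum.union_disjoint A1_def A2_def disjoint_iff)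
  also have "\<dots> \<le> 2 * q ^ k / (1 - q)"
    using s1 s2 by simp
  finally have num: "(\<Sum>y\<in>{..U} \<inter> {y. k \<le> absdiff y \<sigma>}. q ^ absdiff y \<sigma>) \<le> 2 * q ^ k / (1 - q)" .
  have "0 \<le> (\<Sum>y\<in>{..U} \<inter> {y. k \<le> absdiff y \<sigma>}. q ^ absdiff y \<sigma>)"
    using q by (intro sum_nonneg) auto
  moreover have "1 \<le> (\<Sum>y\<le>U. q ^ absdiff y \<sigma>)"
    by (rule one_le_geom_mech_total[OF q(1) assms(3)])
  ultimately have "geom_mech q \<sigma> U {y. k \<le> absdiff y \<sigma>} \<le> (\<Sum>y\<in>{..U} \<inter> {y. k \<le> absdiff y \<sigma>}. q ^ absdiff y \<sigma>)"
    unfolding geom_mech_def by (simp add: divide_le_eq mult_le_cancel_left1)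
  with num show ?thesis
    by linarith
qed

section \<open>Sampling by inverse transform\<close>

definition cumsum :: "(nat \<Rightarrow> nat) \<Rightarrow> nat \<Rightarrow> nat" where
  "cumsum w k = (\<Sum>y<k. w y)"

text \<open>The index \<open>y \<le> U\<close> of the interval \<open>[cumsum w y, cumsum w (Suc y))\<close> containing \<open>u\<close>.\<close>
definition bucket :: "(nat \<Rightarrow> nat) \<Rightarrow> nat \<Rightarrow> nat \<Rightarrow> nat" where
  "bucket w U u = (\<Sum>y<U. if cumsum w (Suc y) \<le> u then 1 else 0)"

lemma cumsum_Suc: "cumsum w (Suc i) = cumsum w i + w i"
  by (simp add: cumsum_def)

lemma cumsum_mono: "i \<le> j \<Longrightarrow> cumsum w i \<le> cumsum w j"
  unfolding cumsum_def by (rule sum_mono2) auto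

lemma bucket_eq:
  assumes "y \<le> U" "cumsum w y \<le> u" "u < cumsum w (Suc y)"
  shows "bucket w U u = y"
proof -
  have "bucket w U u = (\<Sum>i<U. if i < y then 1 else 0)"
    unfolding bucket_def
  proof (rule sum.cong)
    fix i
    show "(if cumsum w (Suc i) \<le> u then 1 else 0) = (if i < y then 1 else 0 :: nat)"
    proof (cases "i < y")
      case True
      then show ?thesis
        using assms(2) cumsum_mono[of "Suc i" y w] by simp
    next
      case False
      then show ?thesis
        using assms(3) cumsum_mono[of "Suc y" "Suc i" w] by simp
    qed
  qed simp
  also have "\<dots> = card ({..<U} \<inter> {i. i < y})"
    by (simp add: sum.If_cases)
  also have "{..<U} \<inter> {i. i < y} = {..<y}"
    using assms(1) by auto
  finally show ?thesis
    by simp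
qed

lemma bucket_exists:
  assumes "u < cumsum w (Suc U)"
  shows "\<exists>y\<le>U. cumsum w y \<le> u \<and> u < cumsum w (Suc y)"
proof -
  define y where "y = (GREATEST y. y \<le> U \<and> cumsum w y \<le> u)"
  have "0 \<le> U \<and> cumsum w 0 \<le> u"
    by (simp add: cumsum_def)
  then have y: "y \<le> U \<and> cumsum w y \<le> u"
    unfolding y_def by (rule GreatestI_nat[where b = U]) simp
  have "u < cumsum w (Suc y)"
  proof (cases "y < U")
    case True
    have "\<not> (Suc y \<le> U \<and> cumsum w (Suc y) \<le> u)"
    proof
      assume "Suc y \<le> U \<and> cumsum w (Suc y) \<le> u"
      then have "Suc y \<le> y"
        unfolding y_def by (rule Greatest_le_nat[where b = U]) simp
      then show False by simp
    qed
    with True show ?thesis by simp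
  qed (use assms y in simp)
  with y show ?thesis by blast
qed

lemma card_bucket_preimage:
  assumes "\<And>y. 0 < w y"
  shows "card {u \<in> {0..<cumsum w (Suc U)}. bucket w U u \<in> A} = (\<Sum>y\<in>{..U} \<inter> A. w y)"
proof -
  have "{u \<in> {0..<cumsum w (Suc U)}. bucket w U u \<in> A} = (\<Union>y\<in>{..U} \<inter> A. {cumsum w y..<cumsum w (Suc y)})"
  proof (intro equalityI subsetI)
    fix u assume "u \<in> {u \<in> {0..<cumsum w (Suc U)}. bucket w U u \<in> A}"
    then have u: "u < cumsum w (Suc U)" "bucket w U u \<in> A"
      by auto
    obtain y where y: "y \<le> U" "cumsum w y \<le> u" "u < cumsum w (Suc y)"
      using bucket_exists[OF u(1)] by blast
    then have "bucket w U u = y"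
      by (rule bucket_eq)
    with u y show "u \<in> (\<Union>y\<in>{..U} \<inter> A. {cumsum w y..<cumsum w (Suc y)})"
      by auto
  next
    fix u assume "u \<in> (\<Union>y\<in>{..U} \<inter> A. {cumsum w y..<cumsum w (Suc y)})"
    then obtain y where "y \<le> U" "y \<in> A" "cumsum w y \<le> u" "u < cumsum w (Suc y)"
      by auto
    moreover have "cumsum w (Suc y) \<le> cumsum w (Suc U)"
      using \<open>y \<le> U\<close> by (intro cumsum_mono) simp
    ultimately show "u \<in> {u \<in> {0..<cumsum w (Suc U)}. bucket w U u \<in> A}"
      using bucket_eq by auto
  qed
  also have "card \<dots> = (\<Sum>y\<in>{..U} \<inter> A. card {cumsum w y..<cumsum w (Suc y)})"
  proof (rule card_UN_disjoint)
    show "\<forall>y\<in>{..U} \<inter> A. \<forall>y'\<in>{..U} \<inter> A. y \<noteq> y' \<longrightarrow>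
        {cumsum w y..<cumsum w (Suc y)} \<inter> {cumsum w y'..<cumsum w (Suc y')} = {}"
    proof (intro ballI impI)
      fix y y' :: nat
      assume "y \<noteq> y'"
      then have "Suc y \<le> y' \<or> Suc y' \<le> y"
        by auto
      then show "{cumsum w y..<cumsum w (Suc y)} \<inter> {cumsum w y'..<cumsum w (Suc y')} = {}"
        using cumsum_mono[of "Suc y" y' w] cumsum_mono[of "Suc y'" y w] by auto
    qed
  qed auto
  also have "\<dots> = (\<Sum>y\<in>{..U} \<inter> A. w y)"
    by (simp add: cumsum_Suc)
  finally show ?thesis .
qed

lemma uniform_bucket_prob:
  assumes "\<And>y. 0 < w y"
  shows "(\<Sum>u\<in>{0..<cumsum w (Suc U)}. if bucket w U u \<in> A then 1 else 0) / of_nat (cumsum w (Suc U))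
    = ennreal (real (\<Sum>y\<in>{..U} \<inter> A. w y) / real (cumsum w (Suc U)))"
proof -
  have "0 < cumsum w (Suc U)"
    using assms[of U] cumsum_mono[of U "Suc U" w] by (simp add: cumsum_Suc)
  moreover have "(\<Sum>u\<in>{0..<cumsum w (Suc U)}. if bucket w U u \<in> A then 1 else 0 :: ennreal)
      = of_nat (card {u \<in> {0..<cumsum w (Suc U)}. bucket w U u \<in> A})"
    by (simp add: sum.If_cases Int_def)
  ultimately show ?thesis
    unfolding card_bucket_preimage[OF assms] ennreal_of_nat_eq_real_of_nat
    by (simp add: divide_ennreal sum_nonneg)
qed

section \<open>The noisy-sum program\<close>

text \<open>Cell \<open>0\<close> receives the output and cells \<open>1..9\<close> serve as registers, so the records stored there
  are first moved to cells \<open>n + 10 ..\<close> (pc 0-34).  After computing \<open>(n + m) ^ d\<close> (pc 35-48), round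
  \<open>j = 0, 1, ...\<close> of the scan (pc 49-96) stops with probability \<open>hazard d m L n j\<close>, decided by one
  \<open>RAND\<close>, and otherwise adds record \<open>j\<close> (or \<open>0\<close> if \<open>j \<ge> n\<close>) to the running sum \<open>\<sigma>\<close>.  After stopping,
  with \<open>U = j * \<Delta>\<close>, the program computes the integer weights of all \<open>y \<le> U\<close> (pc 97-133), draws
  \<open>u\<close> uniformly below their total (pc 134-136) and outputs the index of the bucket containing
  \<open>u\<close> (pc 137-164).  All branches of a round take equally long and the final loops run over all
  \<open>y \<le> U\<close>, so the runtime depends on nothing but \<open>j\<close>.\<close>
definition noisy_sum_prog :: "nat \<Rightarrow> nat \<Rightarrow> nat \<Rightarrow> nat \<Rightarrow> nat \<Rightarrow> nat \<Rightarrow> program" where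
  "noisy_sum_prog d m L \<Delta> qa qb = [
     Bin OpOr 0 1 1,
     InLen 1,
     Bin OpAdd 1 1 1,
     Store 1 0,
     InLen 0,
     Const 1 10,
     Bin OpAdd 0 0 1,
     InLen 1,
     Bin OpAdd 1 1 1,
     Load 1 1,
     Store 0 1,
     Const 1 1,
     Bin OpAdd 1 1 0,
     Store 1 2,
     Const 1 2,
     Bin OpAdd 1 1 0,
     Store 1 3,
     Const 1 3,
     Bin OpAdd 1 1 0,
     Store 1 4,
     Const 1 4,
     Bin OpAdd 1 1 0,
     Store 1 5,
     Const 1 5,
     Bin OpAdd 1 1 0,
     Store 1 6,
     Const 1 6,
     Bin OpAdd 1 1 0,
     Store 1 7,
     Const 1 7,
     Bin OpAdd 1 1 0,
     Store 1 8,
     Const 1 8,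
     Bin OpAdd 1 1 0,
     Store 1 9,
     Const 5 1,
     InLen 9,
     Const 6 m,
     Bin OpAdd 9 9 6,
     Const 3 d,
     Jz 3 45,
     Bin OpMul 5 5 9,
     Const 6 1,
     Bin OpSub 3 3 6,
     Jmp 40,
     Const 1 0,
     Const 2 0,
     Const 3 1,
     Const 4 1,
     Const 6 L,
     Bin OpMul 6 3 6,
     Bin OpMul 7 4 5,
     Bin OpLess 8 7 6,
     Jz 8 57,
     Const 6 1,
     Const 7 L,
     Jmp 60,
     Bin OpOr 6 3 3,
     Bin OpMul 7 4 5,
     Jmp 60,
     Const 9 1,
     Bin OpSub 7 7 9,
     Rand 9 7,
     Bin OpLess 8 9 6,
     Jz 8 66,
     Jmp 97,
     Const 9 1,
     Bin OpAdd 6 1 9,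
     Const 9 9,
     Bin OpLess 7 9 6,
     Const 9 1,
     Bin OpSub 7 9 7,
     InLen 8,
     Const 9 9,
     Bin OpAdd 8 8 9,
     Bin OpMul 7 7 8,
     Bin OpAdd 7 7 6,
     Load 7 7,
     InLen 8,
     Bin OpLess 8 8 6,
     Const 9 1,
     Bin OpSub 8 9 8,
     Bin OpMul 7 7 8,
     Bin OpAdd 2 2 7,
     InLen 8,
     Bin OpLess 8 1 8,
     Bin OpSub 8 9 8,
     Const 6 L,
     Bin OpMul 6 6 8,
     Bin OpAdd 6 6 9,
     Bin OpMul 3 3 6,
     Const 6 (L - 1),
     Bin OpMul 6 6 8,
     Bin OpAdd 6 6 9,
     Bin OpMul 4 4 6,
     Bin OpAdd 1 1 9,
     Jmp 49,
     Const 6 \<Delta>,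
     Bin OpMul 3 1 6,
     Const 4 1,
     Const 1 0,
     Bin OpLess 6 1 3,
     Jz 6 112,
     Bin OpLess 6 1 2,
     Const 9 (qb - qa),
     Bin OpMul 6 6 9,
     Const 9 qb,
     Bin OpSub 6 9 6,
     Bin OpMul 4 4 6,
     Const 9 1,
     Bin OpAdd 1 1 9,
     Jmp 101,
     Bin OpOr 7 4 4,
     Const 5 0,
     Const 1 0,
     Bin OpLess 6 3 1,
     Jz 6 118,
     Jmp 134,
     Bin OpAdd 5 5 7,
     Bin OpLess 6 1 2,
     Const 9 (qb - qa),
     Bin OpMul 6 6 9,
     Const 9 qa,
     Bin OpAdd 6 9 6,
     Bin OpMul 7 7 6,
     Bin OpLess 6 1 2,
     Const 9 (qb - qa),
     Bin OpMul 6 6 9,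
     Const 9 qb,
     Bin OpSub 6 9 6,
     Bin OpDiv 7 7 6,
     Const 9 1,
     Bin OpAdd 1 1 9,
     Jmp 115,
     Const 9 1,
     Bin OpSub 6 5 9,
     Rand 5 6,
     Bin OpOr 7 4 4,
     Const 4 0,
     Const 8 0,
     Const 1 0,
     Bin OpLess 6 1 3,
     Jz 6 163,
     Bin OpAdd 4 4 7,
     Bin OpLess 6 5 4,
     Const 9 1,
     Bin OpSub 6 9 6,
     Bin OpAdd 8 8 6,
     Bin OpLess 6 1 2,
     Const 9 (qb - qa),
     Bin OpMul 6 6 9,
     Const 9 qa,
     Bin OpAdd 6 9 6,
     Bin OpMul 7 7 6,
     Bin OpLess 6 1 2,
     Const 9 (qb - qa),
     Bin OpMul 6 6 9,
     Const 9 qb,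
     Bin OpSub 6 9 6,
     Bin OpDiv 7 7 6,
     Const 9 1,
     Bin OpAdd 1 1 9,
     Jmp 141,
     Bin OpOr 0 8 8,
     Halt]"

lemma fetch_noisy_sum_prog [simp]:
  "fetch (noisy_sum_prog d m L \<Delta> qa qb) 0 = Bin OpOr 0 1 1"
  "fetch (noisy_sum_prog d m L \<Delta> qa qb) 1 = InLen 1"
  "fetch (noisy_sum_prog d m L \<Delta> qa qb) 2 = Bin OpAdd 1 1 1"
  "fetch (noisy_sum_prog d m L \<Delta> qa qb) 3 = Store 1 0"
  "fetch (noisy_sum_prog d m L \<Delta> qa qb) 4 = InLen 0"
  "fetch (noisy_sum_prog d m L \<Delta> qa qb) 5 = Const 1 10"
  "fetch (noisy_sum_prog d m L \<Delta> qa qb) 6 = Bin OpAdd 0 0 1"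
  "fetch (noisy_sum_prog d m L \<Delta> qa qb) 7 = InLen 1"
  "fetch (noisy_sum_prog d m L \<Delta> qa qb) 8 = Bin OpAdd 1 1 1"
  "fetch (noisy_sum_prog d m L \<Delta> qa qb) 9 = Load 1 1"
  "fetch (noisy_sum_prog d m L \<Delta> qa qb) 10 = Store 0 1"
  "fetch (noisy_sum_prog d m L \<Delta> qa qb) 11 = Const 1 1"
  "fetch (noisy_sum_prog d m L \<Delta> qa qb) 12 = Bin OpAdd 1 1 0"
  "fetch (noisy_sum_prog d m L \<Delta> qa qb) 13 = Store 1 2"
  "fetch (noisy_sum_prog d m L \<Delta> qa qb) 14 = Const 1 2"
  "fetch (noisy_sum_prog d m L \<Delta> qa qb) 15 = Bin OpAdd 1 1 0"
  "fetch (noisy_sum_prog d m L \<Delta> qa qb) 16 = Store 1 3"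
  "fetch (noisy_sum_prog d m L \<Delta> qa qb) 17 = Const 1 3"
  "fetch (noisy_sum_prog d m L \<Delta> qa qb) 18 = Bin OpAdd 1 1 0"
  "fetch (noisy_sum_prog d m L \<Delta> qa qb) 19 = Store 1 4"
  "fetch (noisy_sum_prog d m L \<Delta> qa qb) 20 = Const 1 4"
  "fetch (noisy_sum_prog d m L \<Delta> qa qb) 21 = Bin OpAdd 1 1 0"
  "fetch (noisy_sum_prog d m L \<Delta> qa qb) 22 = Store 1 5"
  "fetch (noisy_sum_prog d m L \<Delta> qa qb) 23 = Const 1 5"
  "fetch (noisy_sum_prog d m L \<Delta> qa qb) 24 = Bin OpAdd 1 1 0"
  "fetch (noisy_sum_prog d m L \<Delta> qa qb) 25 = Store 1 6"
  "fetch (noisy_sum_prog d m L \<Delta> qa qb) 26 = Const 1 6"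
  "fetch (noisy_sum_prog d m L \<Delta> qa qb) 27 = Bin OpAdd 1 1 0"
  "fetch (noisy_sum_prog d m L \<Delta> qa qb) 28 = Store 1 7"
  "fetch (noisy_sum_prog d m L \<Delta> qa qb) 29 = Const 1 7"
  "fetch (noisy_sum_prog d m L \<Delta> qa qb) 30 = Bin OpAdd 1 1 0"
  "fetch (noisy_sum_prog d m L \<Delta> qa qb) 31 = Store 1 8"
  "fetch (noisy_sum_prog d m L \<Delta> qa qb) 32 = Const 1 8"
  "fetch (noisy_sum_prog d m L \<Delta> qa qb) 33 = Bin OpAdd 1 1 0"
  "fetch (noisy_sum_prog d m L \<Delta> qa qb) 34 = Store 1 9"
  "fetch (noisy_sum_prog d m L \<Delta> qa qb) 35 = Const 5 1"
  "fetch (noisy_sum_prog d m L \<Delta> qa qb) 36 = InLen 9"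
  "fetch (noisy_sum_prog d m L \<Delta> qa qb) 37 = Const 6 m"
  "fetch (noisy_sum_prog d m L \<Delta> qa qb) 38 = Bin OpAdd 9 9 6"
  "fetch (noisy_sum_prog d m L \<Delta> qa qb) 39 = Const 3 d"
  "fetch (noisy_sum_prog d m L \<Delta> qa qb) 40 = Jz 3 45"
  "fetch (noisy_sum_prog d m L \<Delta> qa qb) 41 = Bin OpMul 5 5 9"
  "fetch (noisy_sum_prog d m L \<Delta> qa qb) 42 = Const 6 1"
  "fetch (noisy_sum_prog d m L \<Delta> qa qb) 43 = Bin OpSub 3 3 6"
  "fetch (noisy_sum_prog d m L \<Delta> qa qb) 44 = Jmp 40"
  "fetch (noisy_sum_prog d m L \<Delta> qa qb) 45 = Const 1 0"
  "fetch (noisy_sum_prog d m L \<Delta> qa qb) 46 = Const 2 0"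
  "fetch (noisy_sum_prog d m L \<Delta> qa qb) 47 = Const 3 1"
  "fetch (noisy_sum_prog d m L \<Delta> qa qb) 48 = Const 4 1"
  "fetch (noisy_sum_prog d m L \<Delta> qa qb) 49 = Const 6 L"
  "fetch (noisy_sum_prog d m L \<Delta> qa qb) 50 = Bin OpMul 6 3 6"
  "fetch (noisy_sum_prog d m L \<Delta> qa qb) 51 = Bin OpMul 7 4 5"
  "fetch (noisy_sum_prog d m L \<Delta> qa qb) 52 = Bin OpLess 8 7 6"
  "fetch (noisy_sum_prog d m L \<Delta> qa qb) 53 = Jz 8 57"
  "fetch (noisy_sum_prog d m L \<Delta> qa qb) 54 = Const 6 1"
  "fetch (noisy_sum_prog d m L \<Delta> qa qb) 55 = Const 7 L"
  "fetch (noisy_sum_prog d m L \<Delta> qa qb) 56 = Jmp 60"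
  "fetch (noisy_sum_prog d m L \<Delta> qa qb) 57 = Bin OpOr 6 3 3"
  "fetch (noisy_sum_prog d m L \<Delta> qa qb) 58 = Bin OpMul 7 4 5"
  "fetch (noisy_sum_prog d m L \<Delta> qa qb) 59 = Jmp 60"
  "fetch (noisy_sum_prog d m L \<Delta> qa qb) 60 = Const 9 1"
  "fetch (noisy_sum_prog d m L \<Delta> qa qb) 61 = Bin OpSub 7 7 9"
  "fetch (noisy_sum_prog d m L \<Delta> qa qb) 62 = Rand 9 7"
  "fetch (noisy_sum_prog d m L \<Delta> qa qb) 63 = Bin OpLess 8 9 6"
  "fetch (noisy_sum_prog d m L \<Delta> qa qb) 64 = Jz 8 66"
  "fetch (noisy_sum_prog d m L \<Delta> qa qb) 65 = Jmp 97"
  "fetch (noisy_sum_prog d m L \<Delta> qa qb) 66 = Const 9 1"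
  "fetch (noisy_sum_prog d m L \<Delta> qa qb) 67 = Bin OpAdd 6 1 9"
  "fetch (noisy_sum_prog d m L \<Delta> qa qb) 68 = Const 9 9"
  "fetch (noisy_sum_prog d m L \<Delta> qa qb) 69 = Bin OpLess 7 9 6"
  "fetch (noisy_sum_prog d m L \<Delta> qa qb) 70 = Const 9 1"
  "fetch (noisy_sum_prog d m L \<Delta> qa qb) 71 = Bin OpSub 7 9 7"
  "fetch (noisy_sum_prog d m L \<Delta> qa qb) 72 = InLen 8"
  "fetch (noisy_sum_prog d m L \<Delta> qa qb) 73 = Const 9 9"
  "fetch (noisy_sum_prog d m L \<Delta> qa qb) 74 = Bin OpAdd 8 8 9"
  "fetch (noisy_sum_prog d m L \<Delta> qa qb) 75 = Bin OpMul 7 7 8"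
  "fetch (noisy_sum_prog d m L \<Delta> qa qb) 76 = Bin OpAdd 7 7 6"
  "fetch (noisy_sum_prog d m L \<Delta> qa qb) 77 = Load 7 7"
  "fetch (noisy_sum_prog d m L \<Delta> qa qb) 78 = InLen 8"
  "fetch (noisy_sum_prog d m L \<Delta> qa qb) 79 = Bin OpLess 8 8 6"
  "fetch (noisy_sum_prog d m L \<Delta> qa qb) 80 = Const 9 1"
  "fetch (noisy_sum_prog d m L \<Delta> qa qb) 81 = Bin OpSub 8 9 8"
  "fetch (noisy_sum_prog d m L \<Delta> qa qb) 82 = Bin OpMul 7 7 8"
  "fetch (noisy_sum_prog d m L \<Delta> qa qb) 83 = Bin OpAdd 2 2 7"
  "fetch (noisy_sum_prog d m L \<Delta> qa qb) 84 = InLen 8"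
  "fetch (noisy_sum_prog d m L \<Delta> qa qb) 85 = Bin OpLess 8 1 8"
  "fetch (noisy_sum_prog d m L \<Delta> qa qb) 86 = Bin OpSub 8 9 8"
  "fetch (noisy_sum_prog d m L \<Delta> qa qb) 87 = Const 6 L"
  "fetch (noisy_sum_prog d m L \<Delta> qa qb) 88 = Bin OpMul 6 6 8"
  "fetch (noisy_sum_prog d m L \<Delta> qa qb) 89 = Bin OpAdd 6 6 9"
  "fetch (noisy_sum_prog d m L \<Delta> qa qb) 90 = Bin OpMul 3 3 6"
  "fetch (noisy_sum_prog d m L \<Delta> qa qb) 91 = Const 6 (L - 1)"
  "fetch (noisy_sum_prog d m L \<Delta> qa qb) 92 = Bin OpMul 6 6 8"
  "fetch (noisy_sum_prog d m L \<Delta> qa qb) 93 = Bin OpAdd 6 6 9"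
  "fetch (noisy_sum_prog d m L \<Delta> qa qb) 94 = Bin OpMul 4 4 6"
  "fetch (noisy_sum_prog d m L \<Delta> qa qb) 95 = Bin OpAdd 1 1 9"
  "fetch (noisy_sum_prog d m L \<Delta> qa qb) 96 = Jmp 49"
  "fetch (noisy_sum_prog d m L \<Delta> qa qb) 97 = Const 6 \<Delta>"
  "fetch (noisy_sum_prog d m L \<Delta> qa qb) 98 = Bin OpMul 3 1 6"
  "fetch (noisy_sum_prog d m L \<Delta> qa qb) 99 = Const 4 1"
  "fetch (noisy_sum_prog d m L \<Delta> qa qb) 100 = Const 1 0"
  "fetch (noisy_sum_prog d m L \<Delta> qa qb) 101 = Bin OpLess 6 1 3"
  "fetch (noisy_sum_prog d m L \<Delta> qa qb) 102 = Jz 6 112"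
  "fetch (noisy_sum_prog d m L \<Delta> qa qb) 103 = Bin OpLess 6 1 2"
  "fetch (noisy_sum_prog d m L \<Delta> qa qb) 104 = Const 9 (qb - qa)"
  "fetch (noisy_sum_prog d m L \<Delta> qa qb) 105 = Bin OpMul 6 6 9"
  "fetch (noisy_sum_prog d m L \<Delta> qa qb) 106 = Const 9 qb"
  "fetch (noisy_sum_prog d m L \<Delta> qa qb) 107 = Bin OpSub 6 9 6"
  "fetch (noisy_sum_prog d m L \<Delta> qa qb) 108 = Bin OpMul 4 4 6"
  "fetch (noisy_sum_prog d m L \<Delta> qa qb) 109 = Const 9 1"
  "fetch (noisy_sum_prog d m L \<Delta> qa qb) 110 = Bin OpAdd 1 1 9"
  "fetch (noisy_sum_prog d m L \<Delta> qa qb) 111 = Jmp 101"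
  "fetch (noisy_sum_prog d m L \<Delta> qa qb) 112 = Bin OpOr 7 4 4"
  "fetch (noisy_sum_prog d m L \<Delta> qa qb) 113 = Const 5 0"
  "fetch (noisy_sum_prog d m L \<Delta> qa qb) 114 = Const 1 0"
  "fetch (noisy_sum_prog d m L \<Delta> qa qb) 115 = Bin OpLess 6 3 1"
  "fetch (noisy_sum_prog d m L \<Delta> qa qb) 116 = Jz 6 118"
  "fetch (noisy_sum_prog d m L \<Delta> qa qb) 117 = Jmp 134"
  "fetch (noisy_sum_prog d m L \<Delta> qa qb) 118 = Bin OpAdd 5 5 7"
  "fetch (noisy_sum_prog d m L \<Delta> qa qb) 119 = Bin OpLess 6 1 2"
  "fetch (noisy_sum_prog d m L \<Delta> qa qb) 120 = Const 9 (qb - qa)"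
  "fetch (noisy_sum_prog d m L \<Delta> qa qb) 121 = Bin OpMul 6 6 9"
  "fetch (noisy_sum_prog d m L \<Delta> qa qb) 122 = Const 9 qa"
  "fetch (noisy_sum_prog d m L \<Delta> qa qb) 123 = Bin OpAdd 6 9 6"
  "fetch (noisy_sum_prog d m L \<Delta> qa qb) 124 = Bin OpMul 7 7 6"
  "fetch (noisy_sum_prog d m L \<Delta> qa qb) 125 = Bin OpLess 6 1 2"
  "fetch (noisy_sum_prog d m L \<Delta> qa qb) 126 = Const 9 (qb - qa)"
  "fetch (noisy_sum_prog d m L \<Delta> qa qb) 127 = Bin OpMul 6 6 9"
  "fetch (noisy_sum_prog d m L \<Delta> qa qb) 128 = Const 9 qb"
  "fetch (noisy_sum_prog d m L \<Delta> qa qb) 129 = Bin OpSub 6 9 6"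
  "fetch (noisy_sum_prog d m L \<Delta> qa qb) 130 = Bin OpDiv 7 7 6"
  "fetch (noisy_sum_prog d m L \<Delta> qa qb) 131 = Const 9 1"
  "fetch (noisy_sum_prog d m L \<Delta> qa qb) 132 = Bin OpAdd 1 1 9"
  "fetch (noisy_sum_prog d m L \<Delta> qa qb) 133 = Jmp 115"
  "fetch (noisy_sum_prog d m L \<Delta> qa qb) 134 = Const 9 1"
  "fetch (noisy_sum_prog d m L \<Delta> qa qb) 135 = Bin OpSub 6 5 9"
  "fetch (noisy_sum_prog d m L \<Delta> qa qb) 136 = Rand 5 6"
  "fetch (noisy_sum_prog d m L \<Delta> qa qb) 137 = Bin OpOr 7 4 4"
  "fetch (noisy_sum_prog d m L \<Delta> qa qb) 138 = Const 4 0"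
  "fetch (noisy_sum_prog d m L \<Delta> qa qb) 139 = Const 8 0"
  "fetch (noisy_sum_prog d m L \<Delta> qa qb) 140 = Const 1 0"
  "fetch (noisy_sum_prog d m L \<Delta> qa qb) 141 = Bin OpLess 6 1 3"
  "fetch (noisy_sum_prog d m L \<Delta> qa qb) 142 = Jz 6 163"
  "fetch (noisy_sum_prog d m L \<Delta> qa qb) 143 = Bin OpAdd 4 4 7"
  "fetch (noisy_sum_prog d m L \<Delta> qa qb) 144 = Bin OpLess 6 5 4"
  "fetch (noisy_sum_prog d m L \<Delta> qa qb) 145 = Const 9 1"
  "fetch (noisy_sum_prog d m L \<Delta> qa qb) 146 = Bin OpSub 6 9 6"
  "fetch (noisy_sum_prog d m L \<Delta> qa qb) 147 = Bin OpAdd 8 8 6"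
  "fetch (noisy_sum_prog d m L \<Delta> qa qb) 148 = Bin OpLess 6 1 2"
  "fetch (noisy_sum_prog d m L \<Delta> qa qb) 149 = Const 9 (qb - qa)"
  "fetch (noisy_sum_prog d m L \<Delta> qa qb) 150 = Bin OpMul 6 6 9"
  "fetch (noisy_sum_prog d m L \<Delta> qa qb) 151 = Const 9 qa"
  "fetch (noisy_sum_prog d m L \<Delta> qa qb) 152 = Bin OpAdd 6 9 6"
  "fetch (noisy_sum_prog d m L \<Delta> qa qb) 153 = Bin OpMul 7 7 6"
  "fetch (noisy_sum_prog d m L \<Delta> qa qb) 154 = Bin OpLess 6 1 2"
  "fetch (noisy_sum_prog d m L \<Delta> qa qb) 155 = Const 9 (qb - qa)"
  "fetch (noisy_sum_prog d m L \<Delta> qa qb) 156 = Bin OpMul 6 6 9"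
  "fetch (noisy_sum_prog d m L \<Delta> qa qb) 157 = Const 9 qb"
  "fetch (noisy_sum_prog d m L \<Delta> qa qb) 158 = Bin OpSub 6 9 6"
  "fetch (noisy_sum_prog d m L \<Delta> qa qb) 159 = Bin OpDiv 7 7 6"
  "fetch (noisy_sum_prog d m L \<Delta> qa qb) 160 = Const 9 1"
  "fetch (noisy_sum_prog d m L \<Delta> qa qb) 161 = Bin OpAdd 1 1 9"
  "fetch (noisy_sum_prog d m L \<Delta> qa qb) 162 = Jmp 141"
  "fetch (noisy_sum_prog d m L \<Delta> qa qb) 163 = Bin OpOr 0 8 8"
  "fetch (noisy_sum_prog d m L \<Delta> qa qb) 164 = Halt"
  by (simp_all add: fetch_def noisy_sum_prog_def)

text \<open>The step from pc \<open>0\<close> produces the pc \<open>Suc 0\<close>, which the numeral table does not match.\<close>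
lemma fetch_noisy_sum_prog_Suc_0 [simp]: "fetch (noisy_sum_prog d m L \<Delta> qa qb) (Suc 0) = InLen 1"
  by (simp add: fetch_def noisy_sum_prog_def)


section \<open>Symbolic execution of the program\<close>

lemmas det_run_simps = det_steps_numeral det_steps_ok_numeral det_step_def

text \<open>\<open>qb ^ U\<close> times the weight \<open>(qa / qb) ^ |y - \<sigma>|\<close> of \<open>geom_mech\<close>, an integer for \<open>y, \<sigma> \<le> U\<close>.\<close>
definition weight :: "nat \<Rightarrow> nat \<Rightarrow> nat \<Rightarrow> nat \<Rightarrow> nat \<Rightarrow> nat" where
  "weight qa qb \<sigma> U y = qa ^ absdiff y \<sigma> * qb ^ (U - absdiff y \<sigma>)"

lemma weight_pos: "0 < qa \<Longrightarrow> 0 < qb \<Longrightarrow> 0 < weight qa qb \<sigma> U y"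
  by (simp add: weight_def)

lemma real_weight:
  assumes "\<sigma> \<le> U" "y \<le> U" "0 < qb"
  shows "real (weight qa qb \<sigma> U y) = real qb ^ U * (real qa / real qb) ^ absdiff y \<sigma>"
proof -
  have "real qb ^ U = real qb ^ (U - absdiff y \<sigma>) * real qb ^ absdiff y \<sigma>"
    using absdiff_le[OF assms(2,1)] by (simp add: power_add[symmetric])
  then show ?thesis
    using assms(3) by (simp add: weight_def power_divide)
qed

text \<open>The update performed by the program when moving from \<open>y = i\<close> to \<open>y = i + 1\<close>.\<close>
lemma weight_Suc:
  assumes "0 < qa" "qa \<le> qb" "\<sigma> \<le> U" "i < U"
  shows "weight qa qb \<sigma> U (Suc i) = weight qa qb \<sigma> U i * (if i < \<sigma> then qb else qa) div (if i < \<sigma> then qa else qb)"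
proof (cases "i < \<sigma>")
  case True
  then have "absdiff i \<sigma> = Suc (absdiff (Suc i) \<sigma>)" "U - absdiff (Suc i) \<sigma> = Suc (U - absdiff i \<sigma>)"
    using assms by (auto simp: absdiff_def)
  with True assms(1) show ?thesis
    by (simp add: weight_def)
next
  case False
  then have "absdiff (Suc i) \<sigma> = Suc (absdiff i \<sigma>)" "U - absdiff i \<sigma> = Suc (U - absdiff (Suc i) \<sigma>)"
    using assms by (auto simp: absdiff_def)
  with False assms show ?thesis
    by (simp add: weight_def)
qed

lemma weight_Suc_below:
  "0 < qa \<Longrightarrow> qa \<le> qb \<Longrightarrow> \<sigma> \<le> U \<Longrightarrow> i < \<sigma> \<Longrightarrow> weight qa qb \<sigma> U i * qb div qa = weight qa qb \<sigma> U (Suc i)"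
  using weight_Suc[of qa qb \<sigma> U i] by simp

lemma weight_Suc_above:
  "0 < qa \<Longrightarrow> qa \<le> qb \<Longrightarrow> \<sigma> \<le> U \<Longrightarrow> \<not> i < \<sigma> \<Longrightarrow> Suc i \<le> U \<Longrightarrow> weight qa qb \<sigma> U i * qa div qb = weight qa qb \<sigma> U (Suc i)"
  using weight_Suc[of qa qb \<sigma> U i] by simp

lemma weight_0: "\<sigma> \<le> U \<Longrightarrow> weight qa qb \<sigma> U 0 = (\<Prod>i<U. if i < \<sigma> then qa else qb)"
proof -
  assume "\<sigma> \<le> U"
  have "(\<Prod>i<k. if i < \<sigma> then qa else qb) = qa ^ min k \<sigma> * qb ^ (k - \<sigma>)" for k
    by (induction k) (auto simp: min_def Suc_diff_le not_less)
  with \<open>\<sigma> \<le> U\<close> show ?thesis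
    by (simp add: weight_def absdiff_def min_def)
qed

text \<open>Records \<open>0..8\<close> have been moved from cells \<open>1..9\<close> (now registers) to cells \<open>n + 10 ..\<close>.\<close>
definition records_stored :: "nat list \<Rightarrow> (nat \<Rightarrow> nat) \<Rightarrow> bool" where
  "records_stored x M \<longleftrightarrow> (\<forall>i<length x. (if i < 9 then M (length x + 9 + Suc i) else M (Suc i)) = x ! i)"

lemma records_stored_upd [simp]: "records_stored x M \<Longrightarrow> a \<le> 9 \<Longrightarrow> records_stored x (M(a := v))"
  unfolding records_stored_def by auto

lemma records_stored_low: "records_stored x M \<Longrightarrow> j < length x \<Longrightarrow> j < 9 \<Longrightarrow> M (10 + (length x + j)) = x ! j"
  unfolding records_stored_def by (auto simp: add.commute add.left_commute)

lemma records_stored_high: "records_stored x M \<Longrightarrow> j < length x \<Longrightarrow> \<not> j < 9 \<Longrightarrow> M (Suc j) = x ! j"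
  unfolding records_stored_def by force

lemma sum_take_Suc: "sum_list (take (Suc j) x) = sum_list (take j x) + (if j < length x then x ! j else 0)"
  by (simp add: take_Suc_conv_app_nth)

lemma sum_take_le: "\<forall>v\<in>set x. v \<le> \<Delta> \<Longrightarrow> sum_list (take j x) \<le> j * \<Delta>"
proof (induction x arbitrary: j)
  case (Cons a x)
  then show ?case by (cases j) (auto simp: add_mono)
qed simp

lemma power_diff_Suc: "1 \<le> (b::nat) \<Longrightarrow> b ^ (j - n) * (1 + (b - 1) * (if n \<le> j then 1 else 0)) = b ^ (Suc j - n)"
  by (cases "n \<le> j") (simp_all add: Suc_diff_le)

lemma uniform_threshold_mix:
  fixes A B :: ennreal
  assumes "0 < M" "N \<le> M"
  shows "(\<Sum>v\<in>{0..<M}. if v < N then A else B) / of_nat M = ennreal (real N / real M) * A + ennreal (1 - real N / real M) * B"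
proof -
  have "(\<Sum>v\<in>{0..<M}. if v < N then A else B) = (\<Sum>v\<in>{0..<N}. A) + (\<Sum>v\<in>{N..<M}. B)"
  proof -
    have "{0..<M} = {0..<N} \<union> {N..<M}"
      using assms(2) by auto
    then show ?thesis
      by (simp add: sum.union_disjoint)
  qed
  also have "\<dots> = of_nat N * A + of_nat (M - N) * B"
    by simp
  finally have "(\<Sum>v\<in>{0..<M}. if v < N then A else B) / of_nat M = (of_nat N / of_nat M) * A + (of_nat (M - N) / of_nat M) * B"
    by (simp add: divide_ennreal_def algebra_simps)
  moreover have "of_nat N / (of_nat M :: ennreal) = ennreal (real N / real M)"
    using assms by (simp add: divide_ennreal[symmetric] ennreal_of_nat_eq_real_of_nat)
  moreover have "of_nat (M - N) / (of_nat M :: ennreal) = ennreal (1 - real N / real M)"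
  proof -
    have "1 - real N / real M = real (M - N) / real M"
      using assms by (simp add: field_simps)
    then show ?thesis
      using assms by (simp add: divide_ennreal[symmetric] ennreal_of_nat_eq_real_of_nat)
  qed
  ultimately show ?thesis
    by simp
qed

text \<open>Records \<open>0..k-1\<close> have been moved to cells \<open>n + 10 ..\<close> (cell \<open>0\<close> holds \<open>n + 10\<close>), and the
  records in cells \<open>k + 1 .. n\<close> are still in place.\<close>
definition copied :: "nat list \<Rightarrow> nat \<Rightarrow> (nat \<Rightarrow> nat) \<Rightarrow> bool" where
  "copied x k M \<longleftrightarrow> M 0 = length x + 10 \<and> (\<forall>i<length x. i < k \<longrightarrow> M (length x + 10 + i) = x ! i)
     \<and> (\<forall>a. k < a \<and> a \<le> length x \<longrightarrow> M a = x ! (a - 1))"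

lemma copied_step:
  "copied x k M \<Longrightarrow> 1 \<le> k \<Longrightarrow> copied x (Suc k) (M(1 := k, 1 := k + (length x + 10), k + (length x + 10) := M (Suc k)))"
  unfolding copied_def by (auto simp: nth_Cons' less_Suc_eq)

lemma copied_records_stored: "copied x 9 M \<Longrightarrow> records_stored x M"
  unfolding copied_def records_stored_def by (auto simp: ac_simps)

definition run_time :: "nat \<Rightarrow> nat \<Rightarrow> nat \<Rightarrow> nat" where
  "run_time d \<Delta> j = 100 + 5 * d + 44 * j + 51 * (j * \<Delta>)"

definition out_dist :: "nat \<Rightarrow> nat \<Rightarrow> nat \<Rightarrow> nat \<Rightarrow> real \<Rightarrow> nat list \<Rightarrow> (nat \<times> nat) set \<Rightarrow> ennreal" where
  "out_dist d m L \<Delta> q x S = (\<Sum>j. ennreal (hazard_dist (hazard d m L (length x)) j *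
     geom_mech q (sum_list (take j x)) (j * \<Delta>) {y. (y, run_time d \<Delta> j) \<in> S}))"

text \<open>The hazard as the fraction that the program computes (pc 49-59) before drawing.\<close>
definition hazard_frac :: "nat \<Rightarrow> nat \<Rightarrow> nat \<Rightarrow> nat \<Rightarrow> nat \<Rightarrow> nat \<times> nat" where
  "hazard_frac d m L n j =
     (if L ^ (j - n) * (n + m) ^ d < (L + 1) ^ (j - n) * L then (1, L)
      else ((L + 1) ^ (j - n), L ^ (j - n) * (n + m) ^ d))"

lemma hazard_frac:
  assumes "1 \<le> L" "1 \<le> m"
  shows "hazard d m L n j = real (fst (hazard_frac d m L n j)) / real (snd (hazard_frac d m L n j))"
    and "fst (hazard_frac d m L n j) \<le> snd (hazard_frac d m L n j)"
    and "1 \<le> snd (hazard_frac d m L n j)"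
proof -
  define A where "A = (L + 1) ^ (j - n)"
  define B where "B = L ^ (j - n) * (n + m) ^ d"
  have "1 \<le> B"
    using assms by (simp add: B_def)
  have "B < A * L \<longleftrightarrow> 1 / real L < real A / real B"
  proof -
    have "B < A * L \<longleftrightarrow> real B < real A * real L"
      by (metis of_nat_less_iff of_nat_mult)
    then show ?thesis
      using assms \<open>1 \<le> B\<close> by (simp add: field_simps)
  qed
  moreover have "hazard d m L n j = min (1 / real L) (real A / real B)"
    unfolding hazard_def A_def B_def by (simp add: power_divide add.commute)
  moreover have frac: "hazard_frac d m L n j = (if B < A * L then (1, L) else (A, B))"
    unfolding hazard_frac_def A_def B_def ..
  ultimately show "hazard d m L n j = real (fst (hazard_frac d m L n j)) / real (snd (hazard_frac d m L n j))"
    by (simp add: min_def)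
  show "fst (hazard_frac d m L n j) \<le> snd (hazard_frac d m L n j)"
    using assms less_imp_le[of A B] order_trans[of A "A * L" B] by (auto simp: frac not_less)
  show "1 \<le> snd (hazard_frac d m L n j)"
    using assms \<open>1 \<le> B\<close> by (simp add: frac)
qed

context
  fixes d m L \<Delta> qa qb :: nat
begin

private abbreviation "P \<equiv> noisy_sum_prog d m L \<Delta> qa qb"

lemma bucket_loop:
  assumes q: "0 < qa" "qa \<le> qb" and "\<sigma> \<le> U"
  shows "pc s = 141 \<Longrightarrow> \<not> halted s \<Longrightarrow> mem s 1 = i \<Longrightarrow> i \<le> U \<Longrightarrow> mem s 2 = \<sigma> \<Longrightarrow> mem s 3 = U
   \<Longrightarrow> mem s 4 = cumsum (weight qa qb \<sigma> U) i \<Longrightarrow> mem s 5 = u \<Longrightarrow> mem s 7 = weight qa qb \<sigma> U i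
   \<Longrightarrow> mem s 8 = (\<Sum>y<i. if cumsum (weight qa qb \<sigma> U) (Suc y) \<le> u then 1 else 0)
   \<Longrightarrow> halt_prob P n S s = (if (bucket (weight qa qb \<sigma> U) U u, time s + 22 * (U - i) + 4) \<in> S then 1 else 0)"
proof (induction "U - i" arbitrary: s i)
  case 0
  then have "i = U" by simp
  with 0 have "det_steps_ok P n 4 s"
    by (simp add: det_run_simps)
  then have "halt_prob P n S s = halt_prob P n S (det_steps P n 4 s)"
    by (rule halt_prob_det_steps)
  also have "\<dots> = (if (bucket (weight qa qb \<sigma> U) U u, time (det_steps P n 4 s)) \<in> S then 1 else 0)"
    using 0 \<open>i = U\<close> by (simp add: det_run_simps halt_prob_halted bucket_def)
  also have "time (det_steps P n 4 s) = time s + 22 * (U - i) + 4"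
    using 0 \<open>i = U\<close> by (simp add: det_run_simps)
  finally show ?case .
next
  case (Suc k)
  then have "i < U" by simp
  with Suc have "det_steps_ok P n 22 s"
    by (simp add: det_run_simps)
  then have "halt_prob P n S s = halt_prob P n S (det_steps P n 22 s)"
    by (rule halt_prob_det_steps)
  also have "\<dots> = (if (bucket (weight qa qb \<sigma> U) U u, time (det_steps P n 22 s) + 22 * (U - Suc i) + 4) \<in> S then 1 else 0)"
    using Suc \<open>i < U\<close> q assms weight_Suc[OF q assms(3) \<open>i < U\<close>]
    by (intro Suc.hyps(1)) (simp_all add: det_run_simps cumsum_Suc)
  also have "time (det_steps P n 22 s) + 22 * (U - Suc i) + 4 = time s + 22 * (U - i) + 4"
    using Suc \<open>i < U\<close> by (simp add: det_run_simps)
  finally show ?case .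
qed

lemma weight_fraction_eq_geom_mech:
  assumes q: "0 < qa" "qa \<le> qb" and "\<sigma> \<le> U"
  shows "real (\<Sum>y\<in>{..U} \<inter> A. weight qa qb \<sigma> U y) / real (cumsum (weight qa qb \<sigma> U) (Suc U))
    = geom_mech (real qa / real qb) \<sigma> U A"
proof -
  have "real (\<Sum>y\<in>{..U} \<inter> B. weight qa qb \<sigma> U y) = real qb ^ U * (\<Sum>y\<in>{..U} \<inter> B. (real qa / real qb) ^ absdiff y \<sigma>)" for B
    unfolding of_nat_sum sum_distrib_left using assms q
    by (intro sum.cong) (auto simp: real_weight)
  from this[of A] this[of UNIV] show ?thesis
    using q by (simp add: geom_mech_def cumsum_def lessThan_Suc_atMost)
qed

lemma uniform_draw:
  assumes q: "0 < qa" "qa \<le> qb" and "\<sigma> \<le> U"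
    and s: "pc s = 115" "\<not> halted s" "mem s 1 = Suc U" "mem s 2 = \<sigma>" "mem s 3 = U"
      "mem s 4 = weight qa qb \<sigma> U 0" "mem s 5 = cumsum (weight qa qb \<sigma> U) (Suc U)"
  shows "halt_prob P n S s = ennreal (geom_mech (real qa / real qb) \<sigma> U {y. (y, time s + 22 * U + 14) \<in> S})"
proof -
  have "0 < qb"
    using q by simp
  define W where "W = cumsum (weight qa qb \<sigma> U) (Suc U)"
  have "0 < W"
    using weight_pos[OF q(1), of qb \<sigma> U U] q by (simp add: W_def cumsum_Suc)
  have "det_steps_ok P n 5 s"
    using s by (simp add: det_run_simps)
  then have "halt_prob P n S s = halt_prob P n S (det_steps P n 5 s)"
    by (rule halt_prob_det_steps)
  define s5 where "s5 = det_steps P n 5 s"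
  have s5: "pc s5 = 136" "\<not> halted s5" "mem s5 6 = W - 1" "time s5 = time s + 5"
    "mem s5 2 = \<sigma>" "mem s5 3 = U" "mem s5 4 = weight qa qb \<sigma> U 0"
    using s by (simp_all add: s5_def W_def det_run_simps)
  have draw: "halt_prob P n S (s5\<lparr>mem := (mem s5)(5 := u), pc := Suc (pc s5), time := Suc (time s5)\<rparr>)
      = (if (bucket (weight qa qb \<sigma> U) U u, time s + 22 * U + 14) \<in> S then 1 else 0)" for u
  proof -
    define su where "su = s5\<lparr>mem := (mem s5)(5 := u), pc := Suc (pc s5), time := Suc (time s5)\<rparr>"
    have "det_steps_ok P n 4 su"
      using s5 by (simp add: su_def det_run_simps)
    then have "halt_prob P n S su = halt_prob P n S (det_steps P n 4 su)"
      by (rule halt_prob_det_steps)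
    also have "\<dots> = (if (bucket (weight qa qb \<sigma> U) U u, time (det_steps P n 4 su) + 22 * U + 4) \<in> S then 1 else 0)"
      using bucket_loop[OF q assms(3), of "det_steps P n 4 su" 0] s5 by (simp add: su_def det_run_simps cumsum_def)
    also have "time (det_steps P n 4 su) = time s + 10"
      using s5 by (simp add: su_def det_run_simps)
    finally show ?thesis
      by (simp add: su_def ac_simps)
  qed
  have "halt_prob P n S s5 = (\<Sum>u\<in>{0..mem s5 6}. halt_prob P n S (s5\<lparr>mem := (mem s5)(5 := u), pc := Suc (pc s5), time := Suc (time s5)\<rparr>))
      / of_nat (Suc (mem s5 6))"
    using s5 by (intro halt_prob_Rand) simp_all
  also have "\<dots> = (\<Sum>u\<in>{0..<W}. if bucket (weight qa qb \<sigma> U) U u \<in> {y. (y, time s + 22 * U + 14) \<in> S} then 1 else 0) / of_nat W"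
    using \<open>0 < W\<close> s5(3) by (simp add: draw atLeastLessThanSuc_atLeastAtMost[symmetric])
  also have "\<dots> = ennreal (geom_mech (real qa / real qb) \<sigma> U {y. (y, time s + 22 * U + 14) \<in> S})"
    unfolding W_def uniform_bucket_prob[OF weight_pos[OF q(1) \<open>0 < qb\<close>]] weight_fraction_eq_geom_mech[OF q assms(3)]
    by simp
  finally show ?thesis
    using \<open>halt_prob P n S s = halt_prob P n S (det_steps P n 5 s)\<close> by (simp add: s5_def)
qed

lemma total_weight_loop:
  assumes q: "0 < qa" "qa \<le> qb" and "\<sigma> \<le> U"
    and exit: "\<And>s'. pc s' = 115 \<Longrightarrow> \<not> halted s' \<Longrightarrow> mem s' 1 = Suc U \<Longrightarrow> mem s' 2 = \<sigma> \<Longrightarrow> mem s' 3 = U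
      \<Longrightarrow> mem s' 4 = weight qa qb \<sigma> U 0 \<Longrightarrow> mem s' 5 = cumsum (weight qa qb \<sigma> U) (Suc U)
      \<Longrightarrow> halt_prob P n S s' = F (time s')"
  shows "pc s = 115 \<Longrightarrow> \<not> halted s \<Longrightarrow> mem s 1 = i \<Longrightarrow> i \<le> Suc U \<Longrightarrow> mem s 2 = \<sigma> \<Longrightarrow> mem s 3 = U
    \<Longrightarrow> mem s 4 = weight qa qb \<sigma> U 0 \<Longrightarrow> mem s 5 = cumsum (weight qa qb \<sigma> U) i
    \<Longrightarrow> (i \<le> U \<longrightarrow> mem s 7 = weight qa qb \<sigma> U i)
    \<Longrightarrow> halt_prob P n S s = F (time s + 18 * (Suc U - i))"
proof (induction "Suc U - i" arbitrary: s i)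
  case 0
  then show ?case
    using exit by simp
next
  case (Suc k)
  then have "i \<le> U" by simp
  with Suc have "det_steps_ok P n 18 s"
    by (simp add: det_run_simps)
  then have "halt_prob P n S s = halt_prob P n S (det_steps P n 18 s)"
    by (rule halt_prob_det_steps)
  also have "\<dots> = F (time (det_steps P n 18 s) + 18 * (Suc U - Suc i))"
    using Suc \<open>i \<le> U\<close> q assms(3)
    by (intro Suc.hyps(1)) (simp_all add: det_run_simps cumsum_Suc weight_Suc_below weight_Suc_above)
  also have "time (det_steps P n 18 s) + 18 * (Suc U - Suc i) = time s + 18 * (Suc U - i)"
    using Suc \<open>i \<le> U\<close> by (simp add: det_run_simps)
  finally show ?case .
qed

lemma initial_weight_loop:
  assumes q: "0 < qa" "qa \<le> qb" and "\<sigma> \<le> U"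
    and exit: "\<And>s'. pc s' = 112 \<Longrightarrow> \<not> halted s' \<Longrightarrow> mem s' 1 = U \<Longrightarrow> mem s' 2 = \<sigma> \<Longrightarrow> mem s' 3 = U
      \<Longrightarrow> mem s' 4 = weight qa qb \<sigma> U 0 \<Longrightarrow> halt_prob P n S s' = F (time s')"
  shows "pc s = 101 \<Longrightarrow> \<not> halted s \<Longrightarrow> mem s 1 = i \<Longrightarrow> i \<le> U \<Longrightarrow> mem s 2 = \<sigma> \<Longrightarrow> mem s 3 = U
    \<Longrightarrow> mem s 4 = (\<Prod>l<i. if l < \<sigma> then qa else qb)
    \<Longrightarrow> halt_prob P n S s = F (time s + 11 * (U - i) + 2)"
proof (induction "U - i" arbitrary: s i)
  case 0
  then have "i = U" by simp
  with 0 have "det_steps_ok P n 2 s"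
    by (simp add: det_run_simps)
  then have "halt_prob P n S s = halt_prob P n S (det_steps P n 2 s)"
    by (rule halt_prob_det_steps)
  also have "\<dots> = F (time (det_steps P n 2 s))"
    using 0 \<open>i = U\<close> weight_0[OF assms(3), of qa qb] by (intro exit) (simp_all add: det_run_simps)
  also have "time (det_steps P n 2 s) = time s + 11 * (U - i) + 2"
    using 0 \<open>i = U\<close> by (simp add: det_run_simps)
  finally show ?case .
next
  case (Suc k)
  then have "i < U" by simp
  with Suc have "det_steps_ok P n 11 s"
    by (simp add: det_run_simps)
  then have "halt_prob P n S s = halt_prob P n S (det_steps P n 11 s)"
    by (rule halt_prob_det_steps)
  also have "\<dots> = F (time (det_steps P n 11 s) + 11 * (U - Suc i) + 2)"
    using Suc \<open>i < U\<close> q by (intro Suc.hyps(1)) (simp_all add: det_run_simps)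
  also have "time (det_steps P n 11 s) + 11 * (U - Suc i) + 2 = time s + 11 * (U - i) + 2"
    using Suc \<open>i < U\<close> by (simp add: det_run_simps)
  finally show ?case .
qed

lemma sampling_phase:
  assumes q: "0 < qa" "qa \<le> qb" and "\<sigma> \<le> j * \<Delta>"
    and s: "pc s = 97" "\<not> halted s" "mem s 1 = j" "mem s 2 = \<sigma>"
  shows "halt_prob P n S s = ennreal (geom_mech (real qa / real qb) \<sigma> (j * \<Delta>) {y. (y, time s + 51 * (j * \<Delta>) + 41) \<in> S})"
proof -
  define U where "U = j * \<Delta>"
  define G where "G t = ennreal (geom_mech (real qa / real qb) \<sigma> U {y. (y, t) \<in> S})" for t
  have from_112: "halt_prob P n S s' = G (time s' + 3 + 18 * Suc U + 22 * U + 14)"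
    if s': "pc s' = 112" "\<not> halted s'" "mem s' 1 = U" "mem s' 2 = \<sigma>" "mem s' 3 = U"
      "mem s' 4 = weight qa qb \<sigma> U 0" for s'
  proof -
    have "det_steps_ok P n 3 s'"
      using s' by (simp add: det_run_simps)
    then have "halt_prob P n S s' = halt_prob P n S (det_steps P n 3 s')"
      by (rule halt_prob_det_steps)
    also have "\<dots> = G (time (det_steps P n 3 s') + 18 * (Suc U - 0) + 22 * U + 14)"
      using q s' assms(3) uniform_draw[OF q, of \<sigma> U]
      by (intro total_weight_loop[where F = "\<lambda>t. G (t + 22 * U + 14)"])
        (simp_all add: U_def G_def det_run_simps cumsum_def)
    also have "time (det_steps P n 3 s') = time s' + 3"
      using s' by (simp add: det_run_simps)
    finally show ?thesis
      by (simp add: add.assoc)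
  qed
  have "det_steps_ok P n 4 s"
    using s by (simp add: det_run_simps)
  then have "halt_prob P n S s = halt_prob P n S (det_steps P n 4 s)"
    by (rule halt_prob_det_steps)
  also have "\<dots> = G (time (det_steps P n 4 s) + 11 * (U - 0) + 2 + 3 + 18 * Suc U + 22 * U + 14)"
    using q s assms(3) from_112
    by (intro initial_weight_loop[where F = "\<lambda>t. G (t + 3 + 18 * Suc U + 22 * U + 14)"])
      (simp_all add: U_def det_run_simps add.assoc)
  also have "time (det_steps P n 4 s) = time s + 4"
    using s by (simp add: det_run_simps)
  finally show ?thesis
    by (simp add: G_def U_def algebra_simps)
qed

lemma scan_continue:
  assumes L: "1 \<le> L" and s: "pc s = 63" "\<not> halted s" "records_stored x (mem s)" "mem s 1 = j" "mem s 2 = sum_list (take j x)"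
    "mem s 3 = (L + 1) ^ (j - length x)" "mem s 4 = L ^ (j - length x)" "mem s 5 = (length x + m) ^ d"
    "\<not> mem s 9 < mem s 6"
  defines "s' \<equiv> det_steps P (length x) 33 s"
  shows "det_steps_ok P (length x) 33 s \<and> pc s' = 49 \<and> \<not> halted s' \<and> records_stored x (mem s') \<and>
    mem s' 1 = Suc j \<and> mem s' 2 = sum_list (take (Suc j) x) \<and>
    mem s' 3 = (L + 1) ^ (Suc j - length x) \<and> mem s' 4 = L ^ (Suc j - length x) \<and>
    mem s' 5 = (length x + m) ^ d \<and> time s' = time s + 33"
proof -
  have p1: "(L + 1) ^ (j - length x) * (1 + L * (if length x \<le> j then 1 else 0)) = (L + 1) ^ (Suc j - length x)"
    using power_diff_Suc[of "L + 1" j "length x"] by simp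
  have p2: "L ^ (j - length x) * (1 + (L - 1) * (if length x \<le> j then 1 else 0)) = L ^ (Suc j - length x)"
    using power_diff_Suc[of L j "length x"] L by simp
  show ?thesis
  proof (cases "j < 9")
    case True
    then show ?thesis
      using s p1 p2 unfolding s'_def
      by (cases "j < length x") (simp_all add: det_run_simps sum_take_Suc records_stored_low not_less)
  next
    case False
    then show ?thesis
      using s p1 p2 unfolding s'_def
      by (cases "j < length x") (simp_all add: det_run_simps sum_take_Suc records_stored_high not_less)
  qed
qed

lemma scan_round:
  fixes S :: "(nat \<times> nat) set"
  assumes q: "0 < qa" "qa \<le> qb" and L: "1 \<le> L" and m: "1 \<le> m" and x: "\<forall>v\<in>set x. v \<le> \<Delta>"
    and s: "pc s = 49" "\<not> halted s" "records_stored x (mem s)" "mem s 1 = j" "mem s 2 = sum_list (take j x)"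
      "mem s 3 = (L + 1) ^ (j - length x)" "mem s 4 = L ^ (j - length x)" "mem s 5 = (length x + m) ^ d"
    and continue: "\<And>s'. pc s' = 49 \<Longrightarrow> \<not> halted s' \<Longrightarrow> records_stored x (mem s') \<Longrightarrow> mem s' 1 = Suc j
      \<Longrightarrow> mem s' 2 = sum_list (take (Suc j) x) \<Longrightarrow> mem s' 3 = (L + 1) ^ (Suc j - length x)
      \<Longrightarrow> mem s' 4 = L ^ (Suc j - length x) \<Longrightarrow> mem s' 5 = (length x + m) ^ d
      \<Longrightarrow> R (time s') \<le> halt_prob P (length x) S s'"
  shows "ennreal (hazard d m L (length x) j) *
      ennreal (geom_mech (real qa / real qb) (sum_list (take j x)) (j * \<Delta>) {y. (y, time s + 51 * (j * \<Delta>) + 55) \<in> S})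
    + ennreal (1 - hazard d m L (length x) j) * R (time s + 44) \<le> halt_prob P (length x) S s"
proof -
  define n where "n = length x"
  define NUM where "NUM = fst (hazard_frac d m L n j)"
  define DEN where "DEN = snd (hazard_frac d m L n j)"
  define G where "G = ennreal (geom_mech (real qa / real qb) (sum_list (take j x)) (j * \<Delta>)
    {y. (y, time s + 51 * (j * \<Delta>) + 55) \<in> S})"
  have h_j: "hazard d m L n j = real NUM / real DEN" and "NUM \<le> DEN" "1 \<le> DEN"
    using hazard_frac[OF L m] by (simp_all add: NUM_def DEN_def)
  let ?cap = "L ^ (j - n) * (n + m) ^ d < (L + 1) ^ (j - n) * L"
  have "det_steps_ok P n 10 s"
    using s by (cases ?cap) (simp_all add: n_def det_run_simps)
  then have "halt_prob P n S s = halt_prob P n S (det_steps P n 10 s)"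
    by (rule halt_prob_det_steps)
  define s10 where "s10 = det_steps P n 10 s"
  have s10: "pc s10 = 62" "\<not> halted s10" "records_stored x (mem s10)" "mem s10 1 = j"
    "mem s10 2 = sum_list (take j x)" "mem s10 3 = (L + 1) ^ (j - n)" "mem s10 4 = L ^ (j - n)"
    "mem s10 5 = (n + m) ^ d" "mem s10 6 = NUM" "mem s10 7 = DEN - 1" "time s10 = time s + 10"
    using s unfolding s10_def
    by (cases ?cap; simp add: n_def det_run_simps NUM_def DEN_def hazard_frac_def)+
  have branch: "(if v < NUM then G else R (time s + 44))
      \<le> halt_prob P n S (s10\<lparr>mem := (mem s10)(9 := v), pc := Suc (pc s10), time := Suc (time s10)\<rparr>)" for v
  proof -
    define sv where "sv = s10\<lparr>mem := (mem s10)(9 := v), pc := Suc (pc s10), time := Suc (time s10)\<rparr>"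
    have sv: "pc sv = 63" "\<not> halted sv" "records_stored x (mem sv)" "mem sv 1 = j"
      "mem sv 2 = sum_list (take j x)" "mem sv 3 = (L + 1) ^ (j - n)" "mem sv 4 = L ^ (j - n)"
      "mem sv 5 = (n + m) ^ d" "mem sv 6 = NUM" "mem sv 9 = v" "time sv = time s + 11"
      using s10 by (simp_all add: sv_def)
    show ?thesis
    proof (cases "v < NUM")
      case True
      then have "det_steps_ok P n 3 sv"
        using sv by (simp add: det_run_simps)
      then have "halt_prob P n S sv = halt_prob P n S (det_steps P n 3 sv)"
        by (rule halt_prob_det_steps)
      also have "\<dots> = G"
        using sv True sampling_phase[OF q sum_take_le[OF x], of "det_steps P n 3 sv" j]
        by (simp add: G_def det_run_simps ac_simps)
      finally show ?thesis
        using True by (simp add: sv_def)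
    next
      case False
      then have "det_steps_ok P n 33 sv \<and> pc (det_steps P n 33 sv) = 49 \<and> \<not> halted (det_steps P n 33 sv) \<and>
        records_stored x (mem (det_steps P n 33 sv)) \<and> mem (det_steps P n 33 sv) 1 = Suc j \<and>
        mem (det_steps P n 33 sv) 2 = sum_list (take (Suc j) x) \<and>
        mem (det_steps P n 33 sv) 3 = (L + 1) ^ (Suc j - n) \<and> mem (det_steps P n 33 sv) 4 = L ^ (Suc j - n) \<and>
        mem (det_steps P n 33 sv) 5 = (n + m) ^ d \<and> time (det_steps P n 33 sv) = time s + 44"
        using scan_continue[OF L, of sv x j] sv by (simp add: n_def)
      then show ?thesis
        using False continue[of "det_steps P n 33 sv"] halt_prob_det_steps[of P n 33 sv S]
        by (simp add: sv_def n_def)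
    qed
  qed
  have "(\<Sum>v\<in>{0..<DEN}. if v < NUM then G else R (time s + 44)) / of_nat DEN
      \<le> (\<Sum>v\<in>{0..mem s10 7}. halt_prob P n S (s10\<lparr>mem := (mem s10)(9 := v), pc := Suc (pc s10), time := Suc (time s10)\<rparr>))
        / of_nat (Suc (mem s10 7))"
    using \<open>1 \<le> DEN\<close> s10(10) branch
    by (simp add: atLeastLessThanSuc_atLeastAtMost[symmetric] divide_right_mono_ennreal sum_mono)
  also have "\<dots> = halt_prob P n S s10"
    using s10 by (intro halt_prob_Rand[symmetric]) simp_all
  finally show ?thesis
    using \<open>1 \<le> DEN\<close> \<open>NUM \<le> DEN\<close> \<open>halt_prob P n S s = halt_prob P n S (det_steps P n 10 s)\<close>
    by (simp add: uniform_threshold_mix h_j[unfolded n_def] s10_def G_def n_def)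
qed

lemma scan_loop:
  fixes S :: "(nat \<times> nat) set"
  assumes q: "0 < qa" "qa \<le> qb" and L: "1 \<le> L" and m: "1 \<le> m" and x: "\<forall>v\<in>set x. v \<le> \<Delta>"
  shows "pc s = 49 \<Longrightarrow> \<not> halted s \<Longrightarrow> records_stored x (mem s) \<Longrightarrow> mem s 1 = j
    \<Longrightarrow> mem s 2 = sum_list (take j x) \<Longrightarrow> mem s 3 = (L + 1) ^ (j - length x)
    \<Longrightarrow> mem s 4 = L ^ (j - length x) \<Longrightarrow> mem s 5 = (length x + m) ^ d
    \<Longrightarrow> (\<Sum>i<k. ennreal (hazard_dist (\<lambda>l. hazard d m L (length x) (j + l)) i) *
          ennreal (geom_mech (real qa / real qb) (sum_list (take (j + i) x)) ((j + i) * \<Delta>)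
            {y. (y, time s + 44 * i + 51 * ((j + i) * \<Delta>) + 55) \<in> S}))
      \<le> halt_prob P (length x) S s"
proof (induction k arbitrary: s j)
  case (Suc k)
  let ?h = "hazard d m L (length x)"
  let ?g = "\<lambda>j t. ennreal (geom_mech (real qa / real qb) (sum_list (take j x)) (j * \<Delta>)
      {y. (y, t + 51 * (j * \<Delta>) + 55) \<in> S})"
  let ?rest = "\<lambda>t. \<Sum>i<k. ennreal (hazard_dist (\<lambda>l. ?h (Suc j + l)) i) * ?g (Suc j + i) (t + 44 * i)"
  have "ennreal (?h j) * ?g j (time s) + ennreal (1 - ?h j) * ?rest (time s + 44) \<le> halt_prob P (length x) S s"
    using Suc.prems Suc.IH[of _ "Suc j"] by (intro scan_round[OF q L m x, where R = ?rest]) (simp_all add: ac_simps)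
  moreover have "(\<Sum>i<Suc k. ennreal (hazard_dist (\<lambda>l. ?h (j + l)) i) * ?g (j + i) (time s + 44 * i))
      = ennreal (?h j) * ?g j (time s) + ennreal (1 - ?h j) * ?rest (time s + 44)"
    using L by (subst sum_hazard_dist_Suc) (simp_all add: hazard_nonneg hazard_le_1 ac_simps)
  ultimately show ?case
    by (simp add: ac_simps)
qed simp

lemma copy_block_fetch:
  assumes "1 \<le> k" "k \<le> 8"
  shows "fetch P (8 + 3 * k) = Const 1 k \<and> fetch P (Suc (8 + 3 * k)) = Bin OpAdd 1 1 0
    \<and> fetch P (Suc (Suc (8 + 3 * k))) = Store 1 (Suc k)"
proof -
  have "k = 1 \<or> k = 2 \<or> k = 3 \<or> k = 4 \<or> k = 5 \<or> k = 6 \<or> k = 7 \<or> k = 8"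
    using assms by arith
  then show ?thesis
    by (elim disjE) simp_all
qed

lemma copy_loop:
  assumes "1 \<le> k" "k \<le> 9"
  shows "pc s = 8 + 3 * k \<Longrightarrow> \<not> halted s \<Longrightarrow> copied x k (mem s) \<Longrightarrow>
    \<exists>s'. halt_prob P (length x) S s = halt_prob P (length x) S s' \<and> pc s' = 35 \<and> \<not> halted s' \<and>
      time s' = time s + 3 * (9 - k) \<and> copied x 9 (mem s')"
  using assms
proof (induction "9 - k" arbitrary: s k)
  case 0
  then show ?case by auto
next
  case (Suc l)
  then have fetch: "fetch P (pc s) = Const 1 k" "fetch P (Suc (pc s)) = Bin OpAdd 1 1 0"
    "fetch P (Suc (Suc (pc s))) = Store 1 (Suc k)"
    using copy_block_fetch[of k] by simp_all
  have "mem s 0 = length x + 10"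
    using Suc.prems by (simp add: copied_def)
  with Suc.prems fetch have "det_steps_ok P (length x) 3 s"
    by (simp add: det_run_simps)
  then have "halt_prob P (length x) S s = halt_prob P (length x) S (det_steps P (length x) 3 s)"
    by (rule halt_prob_det_steps)
  moreover have "pc (det_steps P (length x) 3 s) = 8 + 3 * Suc k" "\<not> halted (det_steps P (length x) 3 s)"
    "time (det_steps P (length x) 3 s) = time s + 3"
    "copied x (Suc k) (mem (det_steps P (length x) 3 s))"
    using Suc.prems fetch \<open>mem s 0 = length x + 10\<close> copied_step[of x k "mem s"]
    by (simp_all add: det_run_simps)
  moreover note Suc.hyps(1)[of "Suc k" "det_steps P (length x) 3 s"]
  ultimately show ?case
    using Suc by fastforce
qed

lemma init_prefix:
  assumes "compatible env x"
  shows "\<exists>s'. halt_prob P (length x) S (init env) = halt_prob P (length x) S s' \<and> pc s' = 11 \<and> \<not> halted s' \<and>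
    time s' = 11 \<and> copied x 1 (mem s')"
proof -
  have env: "\<And>i. i < length x \<Longrightarrow> env (Suc i) = x ! i"
    using assms by (simp add: compatible_def)
  note simps = det_run_simps init_def numeral_2_eq_2[symmetric]
  have "copied x 1 (mem (det_steps P (length x) 11 (init env)))"
    unfolding copied_def
  proof (intro conjI allI impI)
    fix i assume "i < length x" "i < 1"
    then show "mem (det_steps P (length x) 11 (init env)) (length x + 10 + i) = x ! i"
      using env[of 0] by (simp add: simps) arith
  next
    fix a assume a: "1 < a \<and> a \<le> length x"
    then have "env a = x ! (a - 1)"
      using env[of "a - 1"] by auto
    with a show "mem (det_steps P (length x) 11 (init env)) a = x ! (a - 1)"
      by (simp add: simps)
  qed (simp add: simps)
  moreover have "det_steps_ok P (length x) 11 (init env)"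
    by (simp add: simps)
  then have "halt_prob P (length x) S (init env) = halt_prob P (length x) S (det_steps P (length x) 11 (init env))"
    by (rule halt_prob_det_steps)
  moreover have "pc (det_steps P (length x) 11 (init env)) = 11" "\<not> halted (det_steps P (length x) 11 (init env))"
    "time (det_steps P (length x) 11 (init env)) = 11"
    by (simp_all add: simps)
  ultimately show ?thesis
    by blast
qed

lemma power_loop:
  shows "pc s = 40 \<Longrightarrow> \<not> halted s \<Longrightarrow> records_stored x (mem s) \<Longrightarrow> mem s 3 = c \<Longrightarrow> c \<le> d
    \<Longrightarrow> mem s 5 = (length x + m) ^ (d - c) \<Longrightarrow> mem s 9 = length x + m \<Longrightarrow>
    \<exists>s'. halt_prob P (length x) S s = halt_prob P (length x) S s' \<and> pc s' = 49 \<and> \<not> halted s' \<and>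
      records_stored x (mem s') \<and> mem s' 1 = 0 \<and> mem s' 2 = 0 \<and> mem s' 3 = 1 \<and> mem s' 4 = 1 \<and>
      mem s' 5 = (length x + m) ^ d \<and> time s' = time s + 5 * c + 5"
proof (induction c arbitrary: s)
  case 0
  then have "det_steps_ok P (length x) 5 s"
    by (simp add: det_run_simps)
  then have "halt_prob P (length x) S s = halt_prob P (length x) S (det_steps P (length x) 5 s)"
    by (rule halt_prob_det_steps)
  moreover have "pc (det_steps P (length x) 5 s) = 49" "\<not> halted (det_steps P (length x) 5 s)"
    "records_stored x (mem (det_steps P (length x) 5 s))"
    "mem (det_steps P (length x) 5 s) 1 = 0" "mem (det_steps P (length x) 5 s) 2 = 0"
    "mem (det_steps P (length x) 5 s) 3 = 1" "mem (det_steps P (length x) 5 s) 4 = 1"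
    "mem (det_steps P (length x) 5 s) 5 = (length x + m) ^ d"
    "time (det_steps P (length x) 5 s) = time s + 5 * 0 + 5"
    using 0 by (simp_all add: det_run_simps)
  ultimately show ?case
    by blast
next
  case (Suc c)
  then have "det_steps_ok P (length x) 5 s"
    by (simp add: det_run_simps)
  then have "halt_prob P (length x) S s = halt_prob P (length x) S (det_steps P (length x) 5 s)"
    by (rule halt_prob_det_steps)
  moreover have "d - c = Suc (d - Suc c)"
    using Suc by simp
  then have "pc (det_steps P (length x) 5 s) = 40" "\<not> halted (det_steps P (length x) 5 s)"
    "mem (det_steps P (length x) 5 s) 3 = c" "mem (det_steps P (length x) 5 s) 9 = length x + m"
    "mem (det_steps P (length x) 5 s) 5 = (length x + m) ^ (d - c)"
    "records_stored x (mem (det_steps P (length x) 5 s))"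
    "time (det_steps P (length x) 5 s) = time s + 5"
    using Suc.prems by (simp_all add: det_run_simps mult.commute)
  moreover note Suc.IH[of "det_steps P (length x) 5 s"]
  ultimately show ?case
    using Suc.prems by auto
qed

lemma reach_scan:
  assumes "compatible env x"
  shows "\<exists>s. halt_prob P (length x) S (init env) = halt_prob P (length x) S s \<and> pc s = 49 \<and> \<not> halted s \<and>
    records_stored x (mem s) \<and> mem s 1 = 0 \<and> mem s 2 = 0 \<and> mem s 3 = 1 \<and> mem s 4 = 1 \<and>
    mem s 5 = (length x + m) ^ d \<and> time s = 45 + 5 * d"
proof -
  obtain s1 where s1: "halt_prob P (length x) S (init env) = halt_prob P (length x) S s1" "pc s1 = 11"
    "\<not> halted s1" "time s1 = 11" "copied x 1 (mem s1)"
    using init_prefix[OF assms] by blast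
  obtain s2 where s2: "halt_prob P (length x) S s1 = halt_prob P (length x) S s2" "pc s2 = 35"
    "\<not> halted s2" "time s2 = 35" "copied x 9 (mem s2)"
    using copy_loop[of 1 s1 x S] s1 by auto
  have "det_steps_ok P (length x) 5 s2"
    using s2 by (simp add: det_run_simps)
  then have "halt_prob P (length x) S s2 = halt_prob P (length x) S (det_steps P (length x) 5 s2)"
    by (rule halt_prob_det_steps)
  moreover have "pc (det_steps P (length x) 5 s2) = 40" "\<not> halted (det_steps P (length x) 5 s2)"
    "mem (det_steps P (length x) 5 s2) 3 = d" "mem (det_steps P (length x) 5 s2) 5 = 1"
    "mem (det_steps P (length x) 5 s2) 9 = length x + m" "time (det_steps P (length x) 5 s2) = 40"
    "records_stored x (mem (det_steps P (length x) 5 s2))"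
    using s2 copied_records_stored[of x "mem s2"] by (simp_all add: det_run_simps)
  moreover note power_loop[of "det_steps P (length x) 5 s2" x d S]
  ultimately show ?thesis
    using s1 s2 by (auto simp: ac_simps)
qed

lemma halt_prob_ge_out_dist:
  assumes q: "0 < qa" "qa \<le> qb" and L: "1 \<le> L" and m: "1 \<le> m"
    and x: "\<forall>v\<in>set x. v \<le> \<Delta>" and env: "compatible env x"
  shows "out_dist d m L \<Delta> (real qa / real qb) x S \<le> halt_prob P (length x) S (init env)"
  unfolding out_dist_def suminf_eq_SUP
proof (rule SUP_least)
  fix k
  obtain s where s: "halt_prob P (length x) S (init env) = halt_prob P (length x) S s" "pc s = 49" "\<not> halted s"
    "records_stored x (mem s)" "mem s 1 = 0" "mem s 2 = 0" "mem s 3 = 1" "mem s 4 = 1"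
    "mem s 5 = (length x + m) ^ d" "time s = 45 + 5 * d"
    using reach_scan[OF env] by blast
  have "(\<Sum>j<k. ennreal (hazard_dist (hazard d m L (length x)) j *
      geom_mech (real qa / real qb) (sum_list (take j x)) (j * \<Delta>) {y. (y, run_time d \<Delta> j) \<in> S}))
    = (\<Sum>j<k. ennreal (hazard_dist (\<lambda>l. hazard d m L (length x) (0 + l)) j) *
      ennreal (geom_mech (real qa / real qb) (sum_list (take (0 + j) x)) ((0 + j) * \<Delta>)
        {y. (y, time s + 44 * j + 51 * ((0 + j) * \<Delta>) + 55) \<in> S}))"
  proof (intro sum.cong refl)
    fix j
    have "0 \<le> hazard_dist (hazard d m L (length x)) j"
      using L by (intro hazard_dist_nonneg hazard_nonneg hazard_le_1)
    moreover have "0 \<le> geom_mech (real qa / real qb) (sum_list (take j x)) (j * \<Delta>) {y. (y, run_time d \<Delta> j) \<in> S}"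
      by (intro geom_mech_nonneg) simp
    ultimately show "ennreal (hazard_dist (hazard d m L (length x)) j *
        geom_mech (real qa / real qb) (sum_list (take j x)) (j * \<Delta>) {y. (y, run_time d \<Delta> j) \<in> S})
      = ennreal (hazard_dist (\<lambda>l. hazard d m L (length x) (0 + l)) j) *
        ennreal (geom_mech (real qa / real qb) (sum_list (take (0 + j) x)) ((0 + j) * \<Delta>)
          {y. (y, time s + 44 * j + 51 * ((0 + j) * \<Delta>) + 55) \<in> S})"
      by (simp add: s run_time_def ennreal_mult ac_simps)
  qed
  also have "\<dots> \<le> halt_prob P (length x) S (init env)"
    using scan_loop[OF q L m x, of s 0 S k] s by simp
  finally show "(\<Sum>j<k. ennreal (hazard_dist (hazard d m L (length x)) j *
      geom_mech (real qa / real qb) (sum_list (take j x)) (j * \<Delta>) {y. (y, run_time d \<Delta> j) \<in> S}))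
    \<le> halt_prob P (length x) S (init env)" .
qed

end

lemma out_dist_add_compl:
  assumes "0 < q" and x: "\<forall>v\<in>set x. v \<le> \<Delta>" and d: "1 \<le> d" and L: "2 \<le> L" and m: "m = d * (L + 1)"
  shows "out_dist d m L \<Delta> q x S + out_dist d m L \<Delta> q x (- S) = 1"
proof -
  let ?h = "hazard d m L (length x)"
  let ?g = "\<lambda>S j. geom_mech q (sum_list (take j x)) (j * \<Delta>) {y. (y, run_time d \<Delta> j) \<in> S}"
  have "out_dist d m L \<Delta> q x S + out_dist d m L \<Delta> q x (- S)
      = (\<Sum>j. ennreal (hazard_dist ?h j * ?g S j) + ennreal (hazard_dist ?h j * ?g (- S) j))"
    unfolding out_dist_def by (rule suminf_add) (rule summableI)+
  also have "\<dots> = (\<Sum>j. ennreal (hazard_dist ?h j))"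
  proof (rule suminf_cong)
    fix j
    have "?g S j + ?g (- S) j = 1"
      using geom_mech_add_compl[OF \<open>0 < q\<close> sum_take_le[OF x]] by (simp add: Collect_neg_eq)
    moreover have "0 \<le> hazard_dist ?h j" "0 \<le> ?g S j" "0 \<le> ?g (- S) j"
      using L \<open>0 < q\<close> by (auto intro!: hazard_dist_nonneg hazard_nonneg hazard_le_1 geom_mech_nonneg)
    ultimately show "ennreal (hazard_dist ?h j * ?g S j) + ennreal (hazard_dist ?h j * ?g (- S) j) = ennreal (hazard_dist ?h j)"
      by (simp flip: ennreal_plus distrib_left)
  qed
  also have "\<dots> = ennreal 1"
    using L by (intro suminf_ennreal_eq stop_dist_sums[OF d L m] hazard_dist_nonneg hazard_nonneg hazard_le_1) auto
  finally show ?thesis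
    by simp
qed

lemma ennreal_eq_of_lower_bounds:
  fixes a b c d :: ennreal
  assumes "c \<le> a" "d \<le> b" "a + b \<le> 1" "c + d = 1"
  shows "a = c"
proof (rule antisym)
  have "d \<le> c + d"
    by (simp add: add_increasing)
  with assms(4) have "d \<noteq> \<top>"
    using ennreal_one_less_top by (auto simp: top_unique)
  have "d + a \<le> b + a"
    using assms(2) by (rule add_right_mono)
  also have "\<dots> \<le> 1"
    using assms(3) by (simp add: add.commute)
  also have "\<dots> = d + c"
    using assms(4) by (simp add: add.commute)
  finally show "a \<le> c"
    using \<open>d \<noteq> \<top>\<close> by (simp add: ennreal_add_left_cancel_le)
qed (rule assms(1))

text \<open>\<open>halt_prob_ge_out_dist\<close> is only a lower bound, but the bounds for \<open>S\<close> and \<open>- S\<close> add up to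
  \<open>1\<close>, so both are exact.\<close>
theorem out_time_prob_noisy_sum_prog:
  assumes q: "0 < qa" "qa \<le> qb" and x: "\<forall>v\<in>set x. v \<le> \<Delta>" and env: "compatible env x"
    and d: "1 \<le> d" and L: "2 \<le> L" and m: "m = d * (L + 1)"
  shows "ennreal (out_time_prob (noisy_sum_prog d m L \<Delta> qa qb) x env S) = out_dist d m L \<Delta> (real qa / real qb) x S"
proof -
  have "1 \<le> L" "1 \<le> m"
    using d L m by auto
  note lower = halt_prob_ge_out_dist[OF q \<open>1 \<le> L\<close> \<open>1 \<le> m\<close> x env]
  show ?thesis
    unfolding out_time_prob_eq_halt_prob
    using q by (intro ennreal_eq_of_lower_bounds[OF lower lower halt_prob_add_compl_le_1 out_dist_add_compl[OF _ x d L m]]) simp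
qed

section \<open>Privacy and accuracy of the output law\<close>

lemma sum_take_del_one:
  fixes x :: "nat list"
  assumes "i < length x" "i < j"
  shows "sum_list (take j (take i x @ drop (Suc i) x)) + x ! i = sum_list (take (Suc j) x)"
proof -
  have "x = take i x @ [x ! i] @ drop (Suc i) x"
    using assms(1) by (simp add: Cons_nth_drop_Suc)
  then have "take (Suc j) x = take (Suc j) (take i x @ [x ! i] @ drop (Suc i) x)"
    by simp
  also have "\<dots> = take i x @ take (Suc j - i) ([x ! i] @ drop (Suc i) x)"
    using assms by (simp add: min_def)
  also have "Suc j - i = Suc (j - i)"
    using assms(2) by simp
  finally have "take (Suc j) x = take i x @ [x ! i] @ take (j - i) (drop (Suc i) x)"
    by simp
  then have "sum_list (take (Suc j) x) = sum_list (take i x) + (x ! i + sum_list (take (j - i) (drop (Suc i) x)))"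
    by simp
  moreover have "take j (take i x @ drop (Suc i) x) = take i x @ take (j - i) (drop (Suc i) x)"
    using assms by (simp add: min_def)
  then have "sum_list (take j (take i x @ drop (Suc i) x)) = sum_list (take i x) + sum_list (take (j - i) (drop (Suc i) x))"
    by simp
  ultimately show ?thesis
    by (simp add: ac_simps)
qed

lemma absdiff_sum_take_del_one:
  assumes "\<forall>v\<in>set x. v \<le> \<Delta>" "del_one x x'"
  shows "absdiff (sum_list (take j x)) (sum_list (take j x')) \<le> \<Delta>"
proof -
  obtain i where i: "i < length x" and x': "x' = take i x @ drop (Suc i) x"
    using assms(2) by (auto simp: del_one_def)
  show ?thesis
  proof (cases "j \<le> i")
    case True
    then have "take j x' = take j x"
      using i by (simp add: x' min_def)
    then show ?thesis
      by (simp add: absdiff_def)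
  next
    case False
    then have "sum_list (take j x') + x ! i = sum_list (take (Suc j) x)"
      unfolding x' by (intro sum_take_del_one[OF i]) simp
    then have "sum_list (take j x') + x ! i = sum_list (take j x) + (if j < length x then x ! j else 0)"
      by (simp add: sum_take_Suc)
    moreover have "x ! i \<le> \<Delta>" "(if j < length x then x ! j else 0) \<le> \<Delta>"
      using assms(1) i by auto
    ultimately show ?thesis
      by (simp add: absdiff_def)
  qed
qed

lemma geom_mech_le_exp:
  assumes "0 < q" "q \<le> 1" "exp (- \<epsilon>) \<le> q ^ (2 * \<Delta>)"
    and "\<sigma> \<le> U" "\<sigma>' \<le> U" "absdiff \<sigma> \<sigma>' \<le> \<Delta>"
  shows "geom_mech q \<sigma> U A \<le> exp \<epsilon> * geom_mech q \<sigma>' U A"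
proof -
  have "exp (- \<epsilon>) * geom_mech q \<sigma> U A \<le> q ^ (2 * \<Delta>) * geom_mech q \<sigma> U A"
    using assms(1,3) by (intro mult_right_mono geom_mech_nonneg) auto
  also have "\<dots> \<le> geom_mech q \<sigma>' U A"
    using assms by (intro geom_mech_shift)
  finally show ?thesis
    by (simp add: exp_minus field_simps)
qed

lemma suminf_ennreal_mult_le:
  fixes a b a' b' :: "nat \<Rightarrow> real"
  assumes "\<And>j. 0 \<le> a j" "\<And>j. 0 \<le> b j" "\<And>j. 0 \<le> a' j" "\<And>j. 0 \<le> b' j"
    and "\<And>j. a j \<le> A * a' j" "\<And>j. b j \<le> B * b' j"
  shows "(\<Sum>j. ennreal (a j * b j)) \<le> ennreal (A * B) * (\<Sum>j. ennreal (a' j * b' j))"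
proof -
  have "ennreal (a j * b j) \<le> ennreal (A * B) * ennreal (a' j * b' j)" for j
  proof -
    have "0 \<le> A * a' j"
      using assms(1,5)[of j] by linarith
    then have "a j * b j \<le> (A * a' j) * (B * b' j)"
      using assms by (intro mult_mono) auto
    then have "ennreal (a j * b j) \<le> ennreal ((A * B) * (a' j * b' j))"
      by (simp add: ennreal_leI mult_ac)
    also have "\<dots> = ennreal (A * B) * ennreal (a' j * b' j)"
      using assms(3,4)[of j] by (simp add: ennreal_mult'')
    finally show ?thesis .
  qed
  then have "(\<Sum>j. ennreal (a j * b j)) \<le> (\<Sum>j. ennreal (A * B) * ennreal (a' j * b' j))"
    by (intro suminf_le summableI)
  then show ?thesis
    by simp
qed

context
  fixes d m L \<Delta> :: nat and q \<epsilon> :: real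
  assumes \<epsilon>: "0 \<le> \<epsilon>" and q: "0 < q" "q \<le> 1" "exp (- \<epsilon> / 2) \<le> q ^ (2 * \<Delta>)"
    and d: "1 \<le> d" and L: "4 \<le> L" and m: "m = d * (L + 1)"
    and L_ratio: "((real L + 1) / real L)\<^sup>2 \<le> exp (\<epsilon> / 2)" "exp (- \<epsilon> / 2) \<le> 1 - 3 / (real L - 1)"
begin

private lemma out_dist_le_exp_scaled:
  assumes x: "\<forall>v\<in>set x. v \<le> \<Delta>" "\<forall>v\<in>set x'. v \<le> \<Delta>"
    and \<sigma>: "\<And>j. absdiff (sum_list (take j x)) (sum_list (take j x')) \<le> \<Delta>"
    and stop: "\<And>j. hazard_dist (hazard d m L (length x)) j \<le> exp (\<epsilon> / 2) * hazard_dist (hazard d m L (length x')) j"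
  shows "out_dist d m L \<Delta> q x S \<le> exp \<epsilon> * out_dist d m L \<Delta> q x' S"
proof -
  let ?a = "\<lambda>x j. hazard_dist (hazard d m L (length x)) j"
  let ?b = "\<lambda>x j. geom_mech q (sum_list (take j x)) (j * \<Delta>) {y. (y, run_time d \<Delta> j) \<in> S}"
  have "?b x j \<le> exp (\<epsilon> / 2) * ?b x' j" for j
    using q \<sigma> by (intro geom_mech_le_exp sum_take_le x) simp_all
  moreover have "0 \<le> ?a x j" "0 \<le> ?a x' j" for j
    using L by (intro hazard_dist_nonneg hazard_nonneg hazard_le_1; simp)+
  moreover have "0 \<le> ?b x j" "0 \<le> ?b x' j" for j
    using q by (intro geom_mech_nonneg; simp)+
  ultimately have "out_dist d m L \<Delta> q x S \<le> ennreal (exp (\<epsilon> / 2) * exp (\<epsilon> / 2)) * out_dist d m L \<Delta> q x' S"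
    unfolding out_dist_def by (intro suminf_ennreal_mult_le[of "?a x" "?b x" "?a x'" "?b x'"] stop)
  also have "exp (\<epsilon> / 2) * exp (\<epsilon> / 2) = exp \<epsilon>"
    by (simp add: mult_exp_exp)
  finally show ?thesis .
qed

lemma stop_dist_le_exp_prev:
  assumes "1 \<le> n"
  shows "hazard_dist (hazard d m L n) j \<le> exp (\<epsilon> / 2) * hazard_dist (hazard d m L (n - 1)) j"
proof -
  have "exp (- \<epsilon> / 2) * hazard_dist (hazard d m L n) j \<le> (1 - 3 / (real L - 1)) * hazard_dist (hazard d m L n) j"
    using L_ratio(2) L by (intro mult_right_mono hazard_dist_nonneg hazard_nonneg hazard_le_1) auto
  also have "\<dots> \<le> hazard_dist (hazard d m L (n - 1)) j"
    using d L m assms by (intro stop_dist_le_prev) auto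
  finally show ?thesis
    by (simp add: exp_minus field_simps)
qed

lemma stop_dist_prev_le_exp:
  assumes "1 \<le> n"
  shows "hazard_dist (hazard d m L (n - 1)) j \<le> exp (\<epsilon> / 2) * hazard_dist (hazard d m L n) j"
proof -
  have "hazard_dist (hazard d m L (n - 1)) j \<le> ((real L + 1) / real L)\<^sup>2 * hazard_dist (hazard d m L n) j"
    using d L m assms by (intro stop_dist_prev_le) auto
  also have "\<dots> \<le> exp (\<epsilon> / 2) * hazard_dist (hazard d m L n) j"
    using L_ratio(1) L by (intro mult_right_mono hazard_dist_nonneg hazard_nonneg hazard_le_1) auto
  finally show ?thesis .
qed

lemma out_dist_adjacent_le:
  assumes x: "\<forall>v\<in>set x. v \<le> \<Delta>" "\<forall>v\<in>set x'. v \<le> \<Delta>" and "adjacent x x'"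
  shows "out_dist d m L \<Delta> q x S \<le> exp \<epsilon> * out_dist d m L \<Delta> q x' S"
  using \<open>adjacent x x'\<close> unfolding adjacent_def
proof (elim disjE)
  assume "x = x'"
  then have "out_dist d m L \<Delta> q x S = 1 * out_dist d m L \<Delta> q x' S"
    by simp
  also have "\<dots> \<le> exp \<epsilon> * out_dist d m L \<Delta> q x' S"
    using \<epsilon> by (intro mult_right_mono) auto
  finally show ?thesis .
next
  assume del: "del_one x x'"
  then have n: "1 \<le> length x" "length x' = length x - 1"
    by (auto simp: del_one_def)
  show ?thesis
  proof (rule out_dist_le_exp_scaled[OF x])
    show "absdiff (sum_list (take j x)) (sum_list (take j x')) \<le> \<Delta>" for j
      by (rule absdiff_sum_take_del_one[OF x(1) del])
    show "hazard_dist (hazard d m L (length x)) j \<le> exp (\<epsilon> / 2) * hazard_dist (hazard d m L (length x')) j" for j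
      unfolding n(2) by (rule stop_dist_le_exp_prev[OF n(1)])
  qed
next
  assume del: "del_one x' x"
  then have n: "1 \<le> length x'" "length x = length x' - 1"
    by (auto simp: del_one_def)
  show ?thesis
  proof (rule out_dist_le_exp_scaled[OF x])
    show "absdiff (sum_list (take j x)) (sum_list (take j x')) \<le> \<Delta>" for j
      using absdiff_sum_take_del_one[OF x(2) del] by (simp add: absdiff_commute)
    show "hazard_dist (hazard d m L (length x)) j \<le> exp (\<epsilon> / 2) * hazard_dist (hazard d m L (length x')) j" for j
      unfolding n(2) by (rule stop_dist_prev_le_exp[OF n(1)])
  qed
qed

end

lemma suminf_mixture_le:
  fixes Q f :: "nat \<Rightarrow> real"
  assumes Q: "\<And>j. 0 \<le> Q j" "Q sums 1" and "0 \<le> T"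
    and f: "\<And>j. f j \<le> 1" "\<And>j. n \<le> j \<Longrightarrow> f j \<le> T"
  shows "(\<Sum>j. ennreal (Q j * f j)) \<le> ennreal ((\<Sum>j<n. Q j) + T)"
proof -
  have "ennreal (Q j * f j) \<le> ennreal (if j < n then Q j else 0) + ennreal T * ennreal (Q j)" for j
  proof -
    have "Q j * f j \<le> (if j < n then Q j else 0) + T * Q j"
    proof (cases "j < n")
      case True
      then show ?thesis
        using Q(1)[of j] f(1)[of j] \<open>0 \<le> T\<close> by (simp add: mult_left_le add_increasing2)
    next
      case False
      then have "Q j * f j \<le> Q j * T"
        using Q(1)[of j] f(2)[of j] by (intro mult_left_mono) simp_all
      with False show ?thesis
        by (simp add: mult.commute)
    qed
    then show ?thesis
      using Q(1)[of j] \<open>0 \<le> T\<close> by (simp add: ennreal_leI ennreal_plus[symmetric] ennreal_mult[symmetric] del: ennreal_plus)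
  qed
  then have "(\<Sum>j. ennreal (Q j * f j)) \<le> (\<Sum>j. ennreal (if j < n then Q j else 0) + ennreal T * ennreal (Q j))"
    by (intro suminf_le summableI)
  also have "\<dots> = (\<Sum>j. ennreal (if j < n then Q j else 0)) + (\<Sum>j. ennreal T * ennreal (Q j))"
    by (subst suminf_add) auto
  also have "(\<Sum>j. ennreal (if j < n then Q j else 0)) = (\<Sum>j<n. ennreal (Q j))"
    by (subst suminf_finite[of "{..<n}"]) auto
  also have "(\<Sum>j. ennreal T * ennreal (Q j)) = ennreal T * (\<Sum>j. ennreal (Q j))"
    by simp
  also have "(\<Sum>j. ennreal (Q j)) = ennreal 1"
    using Q by (intro suminf_ennreal_eq)
  also have "(\<Sum>j<n. ennreal (Q j)) + ennreal T * ennreal 1 = ennreal ((\<Sum>j<n. Q j) + T)"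
    using Q(1) \<open>0 \<le> T\<close> by (simp add: sum_nonneg)
  finally show ?thesis .
qed

lemma geom_mech_sum_error_le:
  assumes q: "0 < q" "q < 1" and x: "\<forall>v\<in>set x. v \<le> \<Delta>" and "length x \<le> j"
  shows "geom_mech q (sum_list (take j x)) (j * \<Delta>) {y. \<tau> \<le> \<bar>real y - real (sum_list x)\<bar>} \<le> 2 * q ^ nat \<lceil>\<tau>\<rceil> / (1 - q)"
proof -
  have "take j x = x"
    using assms(4) by simp
  have "{y. \<tau> \<le> \<bar>real y - real (sum_list x)\<bar>} \<subseteq> {y. nat \<lceil>\<tau>\<rceil> \<le> absdiff y (sum_list x)}"
    by (auto simp: real_absdiff nat_le_iff ceiling_le_iff)
  then have "geom_mech q (sum_list x) (j * \<Delta>) {y. \<tau> \<le> \<bar>real y - real (sum_list x)\<bar>}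
      \<le> geom_mech q (sum_list x) (j * \<Delta>) {y. nat \<lceil>\<tau>\<rceil> \<le> absdiff y (sum_list x)}"
    using q by (intro geom_mech_mono) auto
  also have "\<dots> \<le> 2 * q ^ nat \<lceil>\<tau>\<rceil> / (1 - q)"
    using q sum_take_le[OF x, of j] \<open>take j x = x\<close> by (intro geom_mech_tail) auto
  finally show ?thesis
    by (simp add: \<open>take j x = x\<close>)
qed

lemma out_dist_error_le:
  assumes q: "0 < q" "q < 1" and x: "\<forall>v\<in>set x. v \<le> \<Delta>"
    and d: "1 \<le> d" and L: "2 \<le> L" and m: "m = d * (L + 1)"
  shows "out_dist d m L \<Delta> q x {(y, t). \<tau> \<le> \<bar>real y - real (sum_list x)\<bar>}
    \<le> ennreal (real (length x) / real ((length x + m) ^ d) + 2 * q ^ nat \<lceil>\<tau>\<rceil> / (1 - q))"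
proof -
  let ?Q = "hazard_dist (hazard d m L (length x))"
  have "out_dist d m L \<Delta> q x {(y, t). \<tau> \<le> \<bar>real y - real (sum_list x)\<bar>}
      \<le> ennreal ((\<Sum>j<length x. ?Q j) + 2 * q ^ nat \<lceil>\<tau>\<rceil> / (1 - q))"
    unfolding out_dist_def using q L
    by (auto intro!: suminf_mixture_le stop_dist_sums[OF d L m] hazard_dist_nonneg hazard_nonneg
        hazard_le_1 geom_mech_le_1 geom_mech_sum_error_le[OF q x])
  also have "\<dots> \<le> ennreal (real (length x) / real ((length x + m) ^ d) + 2 * q ^ nat \<lceil>\<tau>\<rceil> / (1 - q))"
    using sum_stop_dist_before[OF d L m, of "length x"] by (intro ennreal_leI) simp
  finally show ?thesis .
qed

section \<open>Choice of the parameters\<close>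

lemma exists_fraction_between:
  fixes a b :: real
  assumes "0 < a" "a < b" "b \<le> 1"
  shows "\<exists>qa qb :: nat. 0 < qa \<and> qa < qb \<and> a < real qa / real qb \<and> real qa / real qb < b"
proof -
  obtain r where r: "r \<in> \<rat>" "a < r" "r < b"
    using Rats_dense_in_real[OF assms(2)] by blast
  obtain p q :: int where pq: "0 < q" "r = of_int p / of_int q"
    using Rats_cases'[OF r(1)] by metis
  have "0 < real_of_int p / real_of_int q"
    using pq r assms(1) by linarith
  with pq(1) have "0 < p"
    by (simp add: zero_less_divide_iff)
  moreover have "real_of_int p / real_of_int q < 1"
    using pq r assms(3) by linarith
  then have "p < q"
    using pq(1) by simp
  ultimately show ?thesis
    using pq r by (intro exI[of _ "nat p"] exI[of _ "nat q"]) simp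
qed

lemma hazard_ratio_sq_le_exp:
  assumes "0 < \<epsilon>" "4 \<le> \<epsilon> * real L"
  shows "((real L + 1) / real L)\<^sup>2 \<le> exp (\<epsilon> / 2)"
proof -
  have L: "0 < real L"
    using assms by (cases "L = 0") auto
  have "(real L + 1) / real L = 1 + 1 / real L"
    using L by (simp add: field_simps)
  also have "\<dots> \<le> exp (1 / real L)"
    by (rule exp_ge_add_one_self)
  finally have "((real L + 1) / real L)\<^sup>2 \<le> (exp (1 / real L))\<^sup>2"
    using L by (intro power_mono) simp_all
  also have "\<dots> = exp (2 / real L)"
    by (simp add: power2_eq_square mult_exp_exp)
  also have "\<dots> \<le> exp (\<epsilon> / 2)"
    using assms L by (simp add: field_simps)
  finally show ?thesis .
qed

lemma exp_le_hazard_gap: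
  assumes "0 < \<epsilon>" "6 / \<epsilon> + 5 \<le> real L"
  shows "exp (- \<epsilon> / 2) \<le> 1 - 3 / (real L - 1)"
proof -
  have "1 + \<epsilon> / 2 \<le> exp (\<epsilon> / 2)"
    by (rule exp_ge_add_one_self)
  then have "exp (- \<epsilon> / 2) \<le> 1 / (1 + \<epsilon> / 2)"
    using assms(1) by (simp add: exp_minus field_simps)
  also have "\<dots> = 1 - \<epsilon> / (2 + \<epsilon>)"
    using assms(1) by (simp add: field_simps)
  also have "\<dots> \<le> 1 - 3 / (real L - 1)"
  proof -
    have "0 \<le> 6 / \<epsilon>"
      using assms(1) by simp
    then have L: "0 < real L - 1"
      using assms(2) by linarith
    have "6 + 5 * \<epsilon> \<le> \<epsilon> * real L"
      using assms by (simp add: field_simps)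
    then have "3 * (2 + \<epsilon>) \<le> \<epsilon> * (real L - 1)"
      using assms(1) by (simp add: algebra_simps)
    then have "3 / (real L - 1) \<le> \<epsilon> / (2 + \<epsilon>)"
      using L assms(1) by (simp add: field_simps)
    then show ?thesis
      by simp
  qed
  finally show ?thesis .
qed

lemma exp_le_noise_power:
  assumes "0 < \<epsilon>" "exp (- 2 * (\<epsilon> / (8 * (real \<Delta> + 1)))) \<le> r"
  shows "exp (- \<epsilon> / 2) \<le> r ^ (2 * \<Delta>)"
proof -
  have "exp (- \<epsilon> / 2) \<le> exp (- 2 * (\<epsilon> / (8 * (real \<Delta> + 1))) * real (2 * \<Delta>))"
    using assms(1) by (simp add: field_simps)
  also have "\<dots> = exp (- 2 * (\<epsilon> / (8 * (real \<Delta> + 1)))) ^ (2 * \<Delta>)"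
    by (simp add: exp_of_nat_mult[symmetric] mult.commute)
  also have "\<dots> \<le> r ^ (2 * \<Delta>)"
    using assms(2) by (intro power_mono) auto
  finally show ?thesis .
qed

lemma polynomial_tail_le:
  assumes "1 \<le> n" "c + 1 \<le> real d"
  shows "real n / real ((n + m) ^ d) \<le> real n powr (- c)"
proof -
  have "real n ^ d \<le> real ((n + m) ^ d)"
    by (simp add: power_mono)
  then have "real n / real ((n + m) ^ d) \<le> real n / real n ^ d"
    using assms(1) by (intro divide_left_mono) auto
  also have "\<dots> = real n powr (1 - real d)"
    using assms(1) by (simp add: powr_diff powr_realpow)
  also have "\<dots> \<le> real n powr (- c)"
    using assms by (intro powr_mono) auto
  finally show ?thesis .
qed

lemma geometric_tail_le:
  assumes "0 < r" "r \<le> exp (- \<kappa>)" "0 < \<kappa>" "1 \<le> n" "0 \<le> c"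
  shows "r ^ nat \<lceil>(c + 1) * ln (real n) / \<kappa>\<rceil> \<le> real n powr (- c)"
proof -
  define \<tau> where "\<tau> = (c + 1) * ln (real n) / \<kappa>"
  have "r ^ nat \<lceil>\<tau>\<rceil> \<le> exp (- \<kappa>) ^ nat \<lceil>\<tau>\<rceil>"
    using assms by (intro power_mono) auto
  also have "\<dots> = exp (- \<kappa> * real (nat \<lceil>\<tau>\<rceil>))"
    by (simp add: exp_of_nat_mult[symmetric] mult.commute)
  also have "\<dots> \<le> exp (- \<kappa> * \<tau>)"
    using assms(3) real_nat_ceiling_ge[of \<tau>] by simp
  also have "- \<kappa> * \<tau> = - (c + 1) * ln (real n)"
    using assms(3) by (simp add: \<tau>_def field_simps)
  also have "exp (- (c + 1) * ln (real n)) = real n powr (- (c + 1))"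
    using assms(4) by (simp add: powr_def)
  also have "\<dots> \<le> real n powr (- c)"
    using assms(4) by (intro powr_mono) auto
  finally show ?thesis
    by (simp add: \<tau>_def)
qed

lemma noisy_sum_prog_jot_dp:
  assumes \<epsilon>: "0 < \<epsilon>" and q: "0 < qa" "qa \<le> qb" "exp (- \<epsilon> / 2) \<le> (real qa / real qb) ^ (2 * \<Delta>)"
    and d: "1 \<le> d" and L: "6 / \<epsilon> + 5 \<le> real L" and m: "m = d * (L + 1)"
  shows "jot_dp \<Delta> \<epsilon> (noisy_sum_prog d m L \<Delta> qa qb)"
  unfolding jot_dp_def
proof (intro allI impI)
  fix x x' env env' S
  assume h: "dataset \<Delta> x \<and> dataset \<Delta> x' \<and> adjacent x x' \<and> compatible env x \<and> compatible env' x'"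
  have "0 \<le> 6 / \<epsilon>"
    using \<epsilon> by simp
  then have "4 \<le> L"
    using L by linarith
  have "((real L + 1) / real L)\<^sup>2 \<le> exp (\<epsilon> / 2)"
    using \<epsilon> L by (intro hazard_ratio_sq_le_exp) (auto simp: field_simps)
  moreover have "exp (- \<epsilon> / 2) \<le> 1 - 3 / (real L - 1)"
    using \<epsilon> L by (rule exp_le_hazard_gap)
  ultimately have "out_dist d m L \<Delta> (real qa / real qb) x S \<le> exp \<epsilon> * out_dist d m L \<Delta> (real qa / real qb) x' S"
    using h q d m \<epsilon> \<open>4 \<le> L\<close> by (intro out_dist_adjacent_le) (auto simp: dataset_def)
  then have "ennreal (out_time_prob (noisy_sum_prog d m L \<Delta> qa qb) x env S)
      \<le> ennreal (exp \<epsilon> * out_time_prob (noisy_sum_prog d m L \<Delta> qa qb) x' env' S)"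
    using h q d m \<open>4 \<le> L\<close>
    by (simp add: out_time_prob_noisy_sum_prog dataset_def ennreal_mult out_time_prob_nonneg)
  then show "out_time_prob (noisy_sum_prog d m L \<Delta> qa qb) x env S
      \<le> exp \<epsilon> * out_time_prob (noisy_sum_prog d m L \<Delta> qa qb) x' env' S"
    using out_time_prob_nonneg by simp
qed

lemma noisy_sum_prog_terminates:
  assumes q: "0 < qa" "qa \<le> qb" and d: "1 \<le> d" and L: "2 \<le> L" and m: "m = d * (L + 1)"
  shows "terminates \<Delta> (noisy_sum_prog d m L \<Delta> qa qb)"
  unfolding terminates_def
proof (intro allI impI)
  fix x env
  assume h: "dataset \<Delta> x \<and> compatible env x"
  then have x: "\<forall>v\<in>set x. v \<le> \<Delta>"
    by (simp add: dataset_def)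
  have "out_dist d m L \<Delta> (real qa / real qb) x {} = 0"
    by (simp add: out_dist_def geom_mech_def)
  then have "out_dist d m L \<Delta> (real qa / real qb) x UNIV = 1"
    using out_dist_add_compl[OF _ x d L m, of "real qa / real qb" UNIV] q by simp
  then have "ennreal (out_time_prob (noisy_sum_prog d m L \<Delta> qa qb) x env UNIV) = 1"
    using h q d L m by (simp add: out_time_prob_noisy_sum_prog x)
  then show "out_time_prob (noisy_sum_prog d m L \<Delta> qa qb) x env UNIV = 1"
    using out_time_prob_nonneg by simp
qed

lemma noisy_sum_prog_error_le:
  assumes q: "0 < qa" "qa < qb" and x: "dataset \<Delta> x" and env: "compatible env x"
    and d: "1 \<le> d" and L: "2 \<le> L" and m: "m = d * (L + 1)"
  shows "out_time_prob (noisy_sum_prog d m L \<Delta> qa qb) x env {(y, t). \<tau> \<le> \<bar>real y - real (sum_list x)\<bar>}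
    \<le> real (length x) / real ((length x + m) ^ d) + 2 * (real qa / real qb) ^ nat \<lceil>\<tau>\<rceil> / (1 - real qa / real qb)"
proof -
  have x': "\<forall>v\<in>set x. v \<le> \<Delta>"
    using x by (simp add: dataset_def)
  have "ennreal (out_time_prob (noisy_sum_prog d m L \<Delta> qa qb) x env {(y, t). \<tau> \<le> \<bar>real y - real (sum_list x)\<bar>})
      = out_dist d m L \<Delta> (real qa / real qb) x {(y, t). \<tau> \<le> \<bar>real y - real (sum_list x)\<bar>}"
    using q by (intro out_time_prob_noisy_sum_prog[OF _ _ x' env d L m]) simp_all
  also have "\<dots> \<le> ennreal (real (length x) / real ((length x + m) ^ d) + 2 * (real qa / real qb) ^ nat \<lceil>\<tau>\<rceil> / (1 - real qa / real qb))"
    using q by (intro out_dist_error_le[OF _ _ x' d L m]) simp_all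
  finally have "ennreal (out_time_prob (noisy_sum_prog d m L \<Delta> qa qb) x env {(y, t). \<tau> \<le> \<bar>real y - real (sum_list x)\<bar>})
      \<le> ennreal (real (length x) / real ((length x + m) ^ d) + 2 * (real qa / real qb) ^ nat \<lceil>\<tau>\<rceil> / (1 - real qa / real qb))" .
  moreover have "0 \<le> real (length x) / real ((length x + m) ^ d) + 2 * (real qa / real qb) ^ nat \<lceil>\<tau>\<rceil> / (1 - real qa / real qb)"
    using q by simp
  ultimately show ?thesis
    by (simp only: ennreal_le_iff)
qed

lemma noisy_sum_prog_tail_bound:
  assumes c: "0 < c" and \<kappa>: "0 < \<kappa>" and q: "0 < qa" "qa < qb" "real qa / real qb \<le> exp (- \<kappa>)"
    and d: "c + 1 \<le> real d" and L: "2 \<le> L" and m: "m = d * (L + 1)"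
    and x: "dataset \<Delta> x" "compatible env x" "1 \<le> length x"
  shows "out_time_prob (noisy_sum_prog d m L \<Delta> qa qb) x env
      {(y, t). (c + 1) * ln (real (length x)) / \<kappa> \<le> \<bar>real y - real (sum_list x)\<bar>}
    < (2 + 2 / (1 - real qa / real qb)) / real (length x) powr c"
proof -
  define n where "n = length x"
  define r where "r = real qa / real qb"
  have r: "0 < r" "r < 1"
    using q by (simp_all add: r_def)
  have "1 \<le> d"
    using c d by linarith
  have "out_time_prob (noisy_sum_prog d m L \<Delta> qa qb) x env
      {(y, t). (c + 1) * ln (real n) / \<kappa> \<le> \<bar>real y - real (sum_list x)\<bar>}
    \<le> real n / real ((n + m) ^ d) + 2 * r ^ nat \<lceil>(c + 1) * ln (real n) / \<kappa>\<rceil> / (1 - r)"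
    unfolding n_def r_def using q by (intro noisy_sum_prog_error_le[OF _ _ x(1,2) \<open>1 \<le> d\<close> L m]) simp_all
  also have "\<dots> \<le> real n powr (- c) + 2 * real n powr (- c) / (1 - r)"
    using polynomial_tail_le[of n c d m] geometric_tail_le[of r \<kappa> n c] x(3) d r q(3) \<kappa> c
    by (intro add_mono divide_right_mono mult_left_mono) (auto simp: n_def r_def)
  also have "\<dots> < (2 + 2 / (1 - r)) * real n powr (- c)"
    using x(3) by (simp add: n_def algebra_simps Suc_le_eq)
  finally show ?thesis
    by (simp add: n_def r_def powr_minus_divide)
qed

text \<open>The noise parameter \<open>q = qa / qb\<close> must be rational, as the program only does integer
  arithmetic; any value strictly between \<open>exp (- 2 \<kappa>)\<close> and \<open>exp (- \<kappa>)\<close>, where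
  \<open>\<kappa> = \<epsilon> / (8 (\<Delta> + 1))\<close>, will do.\<close>
lemma noisy_sum_prog_guarantees:
  assumes c: "0 < c" and \<epsilon>: "0 < \<epsilon>"
  shows "\<exists>P. jot_dp \<Delta> \<epsilon> P \<and> terminates \<Delta> P \<and>
    (\<exists>N K. \<forall>x env. dataset \<Delta> x \<and> compatible env x \<and> length x \<ge> N \<longrightarrow>
      out_time_prob P x env {(y, t). \<bar>real y - real (sum_list x)\<bar> \<ge> 8 * (real \<Delta> + 1) * (c + 1) * ln (real (length x)) / \<epsilon>}
        < K / real (length x) powr c)"
proof -
  define \<kappa> where "\<kappa> = \<epsilon> / (8 * (real \<Delta> + 1))"
  have "0 < \<kappa>"
    using \<epsilon> by (simp add: \<kappa>_def)
  then obtain qa qb :: nat where q: "0 < qa" "qa < qb" "exp (- 2 * \<kappa>) < real qa / real qb"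
    "real qa / real qb < exp (- \<kappa>)"
    using exists_fraction_between[of "exp (- 2 * \<kappa>)" "exp (- \<kappa>)"] by auto
  define d where "d = nat \<lceil>c\<rceil> + 1"
  define L where "L = nat \<lceil>6 / \<epsilon>\<rceil> + 5"
  have "c + 1 \<le> real d" "6 / \<epsilon> + 5 \<le> real L"
    using real_nat_ceiling_ge[of c] real_nat_ceiling_ge[of "6 / \<epsilon>"] by (simp_all add: d_def L_def)
  have "1 \<le> d" "2 \<le> L"
    by (simp_all add: d_def L_def)
  let ?P = "noisy_sum_prog d (d * (L + 1)) L \<Delta> qa qb"
  have dp: "jot_dp \<Delta> \<epsilon> ?P"
    using \<epsilon> q \<open>1 \<le> d\<close> \<open>6 / \<epsilon> + 5 \<le> real L\<close>
    by (intro noisy_sum_prog_jot_dp exp_le_noise_power) (auto simp: \<kappa>_def)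
  have terminating: "terminates \<Delta> ?P"
    using q \<open>1 \<le> d\<close> \<open>2 \<le> L\<close> by (intro noisy_sum_prog_terminates) auto
  have accurate: "out_time_prob ?P x env {(y, t). \<bar>real y - real (sum_list x)\<bar> \<ge> 8 * (real \<Delta> + 1) * (c + 1) * ln (real (length x)) / \<epsilon>}
      < (2 + 2 / (1 - real qa / real qb)) / real (length x) powr c"
    if "dataset \<Delta> x" "compatible env x" "1 \<le> length x" for x env
  proof -
    have "8 * (real \<Delta> + 1) * (c + 1) * ln (real (length x)) / \<epsilon> = (c + 1) * ln (real (length x)) / \<kappa>"
      by (simp add: \<kappa>_def)
    then show ?thesis
      using q \<open>2 \<le> L\<close> that
      by (simp add: noisy_sum_prog_tail_bound[OF c \<open>0 < \<kappa>\<close> q(1,2) less_imp_le[OF q(4)] \<open>c + 1 \<le> real d\<close>])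
  qed
  show ?thesis
    using dp terminating accurate
    by (intro exI[of _ ?P] conjI exI[of _ "1::nat"] exI[of _ "2 + 2 / (1 - real qa / real qb)"] allI impI) auto
qed

theorem mainTheorem4:
  fixes \<Delta> :: nat
  shows "\<forall>c::real>0. \<exists>C::real>0. \<forall>\<epsilon>::real>0. \<exists>P::program.
           jot_dp \<Delta> \<epsilon> P \<and> terminates \<Delta> P \<and>
           (\<exists>N::nat. \<exists>K::real. \<forall>x env. dataset \<Delta> x \<and> compatible env x \<and> length x \<ge> N \<longrightarrow>
              out_time_prob P x env
                {(y, t). \<bar>real y - real (sum_list x)\<bar> \<ge> C * ln (real (length x)) / \<epsilon>}
              < K / real (length x) powr c)"
proof (intro allI impI, goal_cases)
  case (1 c)
  then show ?case
    using noisy_sum_prog_guarantees[of c] by (intro exI[of _ "8 * (real \<Delta> + 1) * (c + 1)"]) auto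
qed

end
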